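(* Any CPWL function $p\colon\mathbb{R}^n\to\mathbb{R}$ with $k$ distinct linear components can be represented by a ReLU network whose number of layers $l$, maximum width $w$, and number of hidden neurons $h$ satisfy $l\leq\lceil\log_2\phi(n,k)\rceil+\lceil\log_2k\rceil+1$, $w\leq\mathbb{I}[k>1]\left\lceil\frac{3k}{2}\right\rceil \phi(n,k)$, and $h\leq \left(3\cdot 2^{\lceil\log_2k\rceil}+2\lceil\log_2k\rceil-3\right)\phi(n,k)+3\cdot 2^{\lceil\log_2\phi(n,k)\rceil}-2\lceil\log_2k\rceil-3,$ where $\phi(n,k)=\min\left(\sum_{i=0}^n \binom{(k^2-k)/2}{i},\,k!\right)$.
   Context: A function $p\colon\mathbb{R}^n\to\mathbb{R}$ is CPWL (continuous piecewise linear) if there exist finitely many closed subsets $\mathcal{U}_1,\dots,\mathcal{U}_m$ of $\mathbb{R}^n$ whose union is $\mathbb{R}^n$ and such that $p$ is affine on each $\mathcal{U}_i$. An affine function $f$ is a linear component of $p$ if $f=p$ on a union of some nonempty subfamily of a minimum-size family of such closed subsets; $k$ is the number of distinct linear components. $\mathbb{I}[\cdot]$ is the indicator function. An $l$-layer ReLU network $g\colon\mathbb{R}^{k_0}\to\mathbb{R}^{k_l}$ is $g=h_l$ with $h_1(\mathbf{x})=\mathbf{W}_1\mathbf{x}+\mathbf{b}_1$ and $h_i(\mathbf{x})=\mathbf{W}_i\sigma(h_{i-1}(\mathbf{x}))+\mathbf{b}_i$, where $\sigma(x)=\max(0,x)$ is applied coordinatewise and $\mathbf{W}_i\in\mathbb{R}^{k_i\times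 k_{i-1}}$. Its number of hidden neurons is $\sum_{i=1}^{l-1}k_i$ and its maximum width is $\max_{i\in[l-1]}k_i$ (both $0$ when $l=1$); its number of layers is $l$. *)

theory Defs
  imports "HOL-Analysis.Analysis"
begin

definition affine_fun :: "(real^'n \<Rightarrow> real) \<Rightarrow> bool" where
  "affine_fun f \<longleftrightarrow> (\<exists>a b. \<forall>x. f x = a \<bullet> x + b)"

definition cpwl_cover :: "(real^'n \<Rightarrow> real) \<Rightarrow> nat \<Rightarrow> (nat \<Rightarrow> (real^'n) set) \<Rightarrow> bool" where
  "cpwl_cover p m U \<longleftrightarrow>
     (\<forall>i<m. closed (U i)) \<and> (\<Union>i<m. U i) = UNIV \<and>
     (\<forall>i<m. \<exists>f. affine_fun f \<and> (\<forall>x\<in>U i. p x = f x))"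

definition is_cpwl :: "(real^'n \<Rightarrow> real) \<Rightarrow> bool" where
  "is_cpwl p \<longleftrightarrow> continuous_on UNIV p \<and> (\<exists>m U. cpwl_cover p m U)"

definition min_cover_size :: "(real^'n \<Rightarrow> real) \<Rightarrow> nat" where
  "min_cover_size p = (LEAST m. \<exists>U. cpwl_cover p m U)"

definition linear_components :: "(real^'n \<Rightarrow> real) \<Rightarrow> (real^'n \<Rightarrow> real) set" where
  "linear_components p = {f. affine_fun f \<and>
     (\<exists>U S. cpwl_cover p (min_cover_size p) U \<and> S \<subseteq> {..<min_cover_size p} \<and> S \<noteq> {} \<and>
            (\<forall>x\<in>(\<Union>i\<in>S. U i). p x = f x))}"

definition num_components :: "(real^'n \<Rightarrow> real) \<Rightarrow> nat" where
  "num_components p = card (linear_components p)"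

definition relu :: "real \<Rightarrow> real" where
  "relu x = max 0 x"

text \<open>Layers 2..l: each layer is (W_i, b_i); the list ks = [k_1, ..., k_(l-1)] holds the
  hidden widths, and the sum runs over the k_(i-1) coordinates of the previous layer.\<close>
fun eval_layers :: "nat list \<Rightarrow> ((nat \<Rightarrow> nat \<Rightarrow> real) \<times> (nat \<Rightarrow> real)) list \<Rightarrow> (nat \<Rightarrow> real) \<Rightarrow> (nat \<Rightarrow> real)" where
  "eval_layers (k # ks) ((W, b) # Ls) v = eval_layers ks Ls (\<lambda>j. (\<Sum>t<k. W j t * relu (v t)) + b j)"
| "eval_layers _ _ v = v"

text \<open>Network with input R^n and output R (k_l = 1): first layer W_1 x + b_1 with rows W1 j,
  output is coordinate 0 of h_l.\<close>
definition relu_net_eval :: "nat list \<Rightarrow> (nat \<Rightarrow> real^'n) \<Rightarrow> (nat \<Rightarrow> real)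
     \<Rightarrow> ((nat \<Rightarrow> nat \<Rightarrow> real) \<times> (nat \<Rightarrow> real)) list \<Rightarrow> real^'n \<Rightarrow> real" where
  "relu_net_eval ks W1 b1 Ls x = eval_layers ks Ls (\<lambda>j. W1 j \<bullet> x + b1 j) 0"

definition relu_net_wf :: "nat list \<Rightarrow> ((nat \<Rightarrow> nat \<Rightarrow> real) \<times> (nat \<Rightarrow> real)) list \<Rightarrow> bool" where
  "relu_net_wf ks Ls \<longleftrightarrow> length ks = length Ls \<and> (\<forall>k\<in>set ks. 0 < k)"

definition num_layers :: "nat list \<Rightarrow> nat" where
  "num_layers ks = length ks + 1"

definition max_width :: "nat list \<Rightarrow> nat" where
  "max_width ks = foldr max ks 0"

definition hidden_neurons :: "nat list \<Rightarrow> nat" where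
  "hidden_neurons ks = sum_list ks"

definition phi :: "nat \<Rightarrow> nat \<Rightarrow> nat" where
  "phi n k = min (\<Sum>i\<le>n. ((k^2 - k) div 2) choose i) (fact k)"

end

theory Submission
  imports Defs "HOL-Combinatorics.Permutations"
begin

(* Enumerate the k linear components f_1, ..., f_k of p.  At a generic point, where the f_j take
   pairwise distinct values, their order is one of at most phi(n, k) patterns: there are at most
   k! orders, and by the Sauer-Shelah lemma at most sum_{i <= n} C(k(k-1)/2, i), since no n + 1 of
   the comparisons f_i < f_j can be shattered (n + 1 slope differences are linearly dependent).
   For each realized pattern take the least set S of components lying above p at a generic point
   with that pattern; then p = max_S min_{j in S} f_j.  The minimum is at most p because along a
   segment p has to cross from above to below one of the f_j in S, and the maximum is at least p
   by density of the generic points.  A maximum of M <= phi(n, k) minima of k affine functions is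
   evaluated by two tournaments of pairwise min / max layers, a + s relu (s (b - a)) costing three
   neurons per pair, which yields the stated depth, width and number of neurons. *)

section \<open>The Sauer--Shelah lemma and the bound \<open>phi\<close>\<close>

definition shatters :: "'a set set \<Rightarrow> 'a set \<Rightarrow> bool" where
  "shatters \<F> A \<longleftrightarrow> (\<forall>B\<subseteq>A. \<exists>F\<in>\<F>. F \<inter> A = B)"

lemma shatters_subset: "shatters \<F> A \<Longrightarrow> A' \<subseteq> A \<Longrightarrow> shatters \<F> A'"
  unfolding shatters_def
proof (intro allI impI)
  fix B assume "\<forall>B\<subseteq>A. \<exists>F\<in>\<F>. F \<inter> A = B" "A' \<subseteq> A" "B \<subseteq> A'"
  then obtain F where "F \<in> \<F>" "F \<inter> A = B" by (meson order_trans)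
  then show "\<exists>F\<in>\<F>. F \<inter> A' = B" using \<open>A' \<subseteq> A\<close> \<open>B \<subseteq> A'\<close> by blast
qed

lemma card_split_at_element:
  assumes "finite \<F>"
  shows "card \<F> = card ((\<lambda>F. F - {x}) ` \<F>) + card {F \<in> \<F>. x \<notin> F \<and> insert x F \<in> \<F>}"
proof -
  define Fa where "Fa = {F \<in> \<F>. x \<notin> F}"
  define Fb where "Fb = {F \<in> \<F>. x \<in> F}"
  have fin: "finite Fa" "finite Fb" using assms unfolding Fa_def Fb_def by auto
  have inj: "inj_on (\<lambda>F. F - {x}) Fb" unfolding Fb_def inj_on_def
    by (metis insert_Diff mem_Collect_eq)
  have Fb_image: "(\<lambda>F. F - {x}) ` Fb = {G. x \<notin> G \<and> insert x G \<in> \<F>}"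
  proof
    show "(\<lambda>F. F - {x}) ` Fb \<subseteq> {G. x \<notin> G \<and> insert x G \<in> \<F>}"
      unfolding Fb_def by (auto simp: insert_absorb)
    show "{G. x \<notin> G \<and> insert x G \<in> \<F>} \<subseteq> (\<lambda>F. F - {x}) ` Fb"
      unfolding Fb_def by (auto intro!: image_eqI[where x = "insert x G" for G])
  qed
  have split: "\<F> = Fa \<union> Fb" unfolding Fa_def Fb_def by auto
  have "(\<lambda>F. F - {x}) ` Fa = (\<lambda>F. F) ` Fa" by (rule image_cong) (auto simp: Fa_def)
  then have "(\<lambda>F. F - {x}) ` \<F> = Fa \<union> (\<lambda>F. F - {x}) ` Fb"
    by (subst split) (simp add: image_Un)
  moreover have "{F \<in> \<F>. x \<notin> F \<and> insert x F \<in> \<F>} = Fa \<inter> (\<lambda>F. F - {x}) ` Fb"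
    unfolding Fb_image Fa_def by auto
  ultimately have "card ((\<lambda>F. F - {x}) ` \<F>) + card {F \<in> \<F>. x \<notin> F \<and> insert x F \<in> \<F>} =
      card Fa + card Fb"
    using card_Un_Int[of Fa "(\<lambda>F. F - {x}) ` Fb"] fin card_image[OF inj] by simp
  also have "\<dots> = card (Fa \<union> Fb)"
    by (rule card_Un_disjoint[symmetric]) (use fin in \<open>auto simp: Fa_def Fb_def\<close>)
  also note split[symmetric]
  finally show ?thesis by simp
qed

lemma shatters_image_Diff: "shatters ((\<lambda>F. F - {x}) ` \<F>) A \<Longrightarrow> x \<notin> A \<Longrightarrow> shatters \<F> A"
  unfolding shatters_def
proof (intro allI impI)
  fix B assume "\<forall>B\<subseteq>A. \<exists>G\<in>(\<lambda>F. F - {x}) ` \<F>. G \<inter> A = B" "x \<notin> A" "B \<subseteq> A"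
  then obtain F where "F \<in> \<F>" "(F - {x}) \<inter> A = B" by blast
  then show "\<exists>F\<in>\<F>. F \<inter> A = B" using \<open>x \<notin> A\<close> by blast
qed

lemma shatters_insert:
  assumes sh: "shatters {F \<in> \<F>. x \<notin> F \<and> insert x F \<in> \<F>} A" and "x \<notin> A"
  shows "shatters \<F> (insert x A)"
  unfolding shatters_def
proof (intro allI impI)
  fix B assume B: "B \<subseteq> insert x A"
  then have Bx: "B - {x} \<subseteq> A" by blast
  obtain F where F: "F \<in> \<F>" "x \<notin> F" "insert x F \<in> \<F>" "F \<inter> A = B - {x}"
    using sh[unfolded shatters_def, rule_format, OF Bx] by blast
  show "\<exists>F\<in>\<F>. F \<inter> insert x A = B"
  proof (cases "x \<in> B")
    case True
    then have "insert x F \<inter> insert x A = B" using F(4) B by blast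
    then show ?thesis using F(3) by blast
  next
    case False
    then have "F \<inter> insert x A = B" using F(2,4) B by blast
    then show ?thesis using F(1) by blast
  qed
qed

lemma card_shattered_insert:
  assumes "finite X" "x \<notin> X"
  shows "card {A. A \<subseteq> X \<and> shatters ((\<lambda>F. F - {x}) ` \<F>) A} +
      card {A. A \<subseteq> X \<and> shatters {F \<in> \<F>. x \<notin> F \<and> insert x F \<in> \<F>} A}
    \<le> card {A. A \<subseteq> insert x X \<and> shatters \<F> A}"
proof -
  define S where "S \<G> = {A. A \<subseteq> X \<and> shatters \<G> A}" for \<G>
  define \<F>1 where "\<F>1 = (\<lambda>F. F - {x}) ` \<F>"
  define \<F>2 where "\<F>2 = {F \<in> \<F>. x \<notin> F \<and> insert x F \<in> \<F>}"
  have x: "x \<notin> A" if "A \<in> S \<G>" for A \<G> using that assms(2) unfolding S_def by auto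
  have "inj_on (insert x) (S \<F>2)"
  proof (rule inj_onI)
    fix A A' assume "A \<in> S \<F>2" "A' \<in> S \<F>2" "insert x A = insert x A'"
    then show "A = A'" using x[of A \<F>2] x[of A' \<F>2] by (simp add: insert_ident)
  qed
  moreover have "S \<F>1 \<inter> insert x ` S \<F>2 = {}" using x[of _ \<F>1] by blast
  moreover have "finite (S \<G>)" for \<G>
    unfolding S_def by (rule finite_subset[of _ "Pow X"]) (auto simp: assms(1))
  ultimately have "card (S \<F>1) + card (S \<F>2) = card (S \<F>1 \<union> insert x ` S \<F>2)"
    by (simp add: card_Un_disjoint card_image)
  also have "\<dots> \<le> card {A. A \<subseteq> insert x X \<and> shatters \<F> A}"
  proof (rule card_mono)
    show "finite {A. A \<subseteq> insert x X \<and> shatters \<F> A}"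
      by (rule finite_subset[of _ "Pow (insert x X)"]) (auto simp: assms(1))
    have "A \<subseteq> insert x X \<and> shatters \<F> A" if "A \<in> S \<F>1" for A
      using that x shatters_image_Diff[of x \<F> A] unfolding S_def \<F>1_def by auto
    moreover have "insert x A \<subseteq> insert x X \<and> shatters \<F> (insert x A)" if "A \<in> S \<F>2" for A
      using that x shatters_insert[of \<F> x A] unfolding S_def \<F>2_def by auto
    ultimately show "S \<F>1 \<union> insert x ` S \<F>2 \<subseteq> {A. A \<subseteq> insert x X \<and> shatters \<F> A}" by blast
  qed
  finally show ?thesis unfolding S_def \<F>1_def \<F>2_def .
qed

lemma card_le_card_shattered:
  assumes "finite X" "\<F> \<subseteq> Pow X"
  shows "card \<F> \<le> card {A. A \<subseteq> X \<and> shatters \<F> A}"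
  using assms
proof (induction X arbitrary: \<F> rule: finite_induct)
  case empty
  then consider "\<F> = {}" | "\<F> = {{}}" by (metis Pow_empty subset_singleton_iff)
  then show ?case
  proof cases
    case 2
    then have "{A. A \<subseteq> {} \<and> shatters \<F> A} = {{}}" by (auto simp: shatters_def)
    then show ?thesis using 2 by simp
  qed simp
next
  case (insert x X)
  define \<F>1 where "\<F>1 = (\<lambda>F. F - {x}) ` \<F>"
  define \<F>2 where "\<F>2 = {F \<in> \<F>. x \<notin> F \<and> insert x F \<in> \<F>}"
  have "finite \<F>"
    using insert.prems insert.hyps(1) by (meson finite_Pow_iff finite_insert rev_finite_subset)
  then have "card \<F> = card \<F>1 + card \<F>2" unfolding \<F>1_def \<F>2_def by (rule card_split_at_element)
  also have "\<dots> \<le> card {A. A \<subseteq> X \<and> shatters \<F>1 A} + card {A. A \<subseteq> X \<and> shatters \<F>2 A}"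
    using insert.prems unfolding \<F>1_def \<F>2_def by (intro add_mono insert.IH) auto
  also have "\<dots> \<le> card {A. A \<subseteq> insert x X \<and> shatters \<F> A}"
    unfolding \<F>1_def \<F>2_def by (rule card_shattered_insert[OF insert.hyps])
  finally show ?case .
qed

lemma card_subsets_card_le:
  assumes "finite P"
  shows "card {A. A \<subseteq> P \<and> card A \<le> n} = (\<Sum>i\<le>n. card P choose i)"
proof -
  have "{A. A \<subseteq> P \<and> card A \<le> n} = (\<Union>i\<le>n. {A. A \<subseteq> P \<and> card A = i})" by auto
  also have "card \<dots> = (\<Sum>i\<le>n. card {A. A \<subseteq> P \<and> card A = i})"
    by (rule card_UN_disjoint) (use assms in auto)
  finally show ?thesis by (simp add: n_subsets[OF assms])
qed

theorem sauer_shelah: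
  assumes "finite X" "\<F> \<subseteq> Pow X" "\<And>A. A \<subseteq> X \<Longrightarrow> shatters \<F> A \<Longrightarrow> card A \<le> n"
  shows "card \<F> \<le> (\<Sum>i\<le>n. card X choose i)"
proof -
  have "card \<F> \<le> card {A. A \<subseteq> X \<and> shatters \<F> A}" by (rule card_le_card_shattered[OF assms(1,2)])
  also have "\<dots> \<le> card {A. A \<subseteq> X \<and> card A \<le> n}" by (rule card_mono) (use assms in auto)
  also have "\<dots> = (\<Sum>i\<le>n. card X choose i)" by (rule card_subsets_card_le[OF assms(1)])
  finally show ?thesis .
qed

definition ordered_pairs :: "nat \<Rightarrow> (nat \<times> nat) set" where
  "ordered_pairs k = {(i, j). i < j \<and> j < k}"

lemma finite_ordered_pairs: "finite (ordered_pairs k)"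
  by (rule finite_subset[of _ "{..<k} \<times> {..<k}"]) (auto simp: ordered_pairs_def)

lemma card_ordered_pairs: "card (ordered_pairs k) = (k ^ 2 - k) div 2"
proof -
  have "2 * card (ordered_pairs k) + k = k * k"
  proof (induction k)
    case (Suc k)
    have eq: "ordered_pairs (Suc k) = ordered_pairs k \<union> (\<lambda>i. (i, k)) ` {..<k}"
      unfolding ordered_pairs_def by auto
    have "card (ordered_pairs (Suc k)) = card (ordered_pairs k) + card ((\<lambda>i. (i, k)) ` {..<k})"
      unfolding eq by (intro card_Un_disjoint finite_ordered_pairs) (auto simp: ordered_pairs_def)
    moreover have "card ((\<lambda>i. (i, k)) ` {..<k}) = k" by (subst card_image) (auto simp: inj_on_def)
    ultimately show ?case using Suc by simp
  qed (simp add: ordered_pairs_def)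
  then show ?thesis by (simp add: power2_eq_square)
qed

lemma phi_one: "phi n 1 = 1"
proof -
  have "(\<Sum>i\<le>n. (0::nat) choose i) = 1" by (induction n) simp_all
  then show ?thesis unfolding phi_def by simp
qed

lemma phi_ge_two:
  assumes "2 \<le> k" "1 \<le> n"
  shows "2 \<le> phi n k"
proof -
  define N where "N = (k ^ 2 - k) div 2"
  have "2 * k \<le> k * k" using assms(1) by (intro mult_right_mono) auto
  then have N: "1 \<le> N" unfolding N_def power2_eq_square using assms(1) by linarith
  have "(\<Sum>i\<le>1. N choose i) \<le> (\<Sum>i\<le>n. N choose i)" using assms(2) by (intro sum_mono2) auto
  moreover have "(\<Sum>i\<le>1. N choose i) = 1 + N" by (simp add: atMost_Suc)
  moreover have "fact 2 \<le> (fact k :: nat)" using assms(1) by (rule fact_mono)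
  ultimately show ?thesis using N unfolding phi_def N_def[symmetric] by simp
qed

section \<open>Affine functions and crossings along segments\<close>

lemma affine_eq_on_open:
  fixes a c :: "'a::real_inner"
  assumes "open Q" "x0 \<in> Q" and eq: "\<And>x. x \<in> Q \<Longrightarrow> a \<bullet> x + b = c \<bullet> x + d"
  shows "a = c \<and> b = d"
proof -
  obtain r where r: "r > 0" "ball x0 r \<subseteq> Q" using assms(1,2) open_contains_ball by blast
  define w where "w = a - c"
  define e where "e = r / (2 * (norm w + 1))"
  have e: "e > 0" unfolding e_def using r by (simp add: add_nonneg_pos)
  have "norm (e *\<^sub>R w) = e * norm w" using e by simp
  also have "\<dots> < r" unfolding e_def using r by (simp add: divide_less_eq add_nonneg_pos)
  finally have "x0 + e *\<^sub>R w \<in> Q" using r by (auto simp: dist_norm)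
  then have "w \<bullet> (x0 + e *\<^sub>R w) = w \<bullet> x0"
    using eq[of "x0 + e *\<^sub>R w"] eq[OF assms(2)] unfolding w_def by (simp add: inner_diff_left)
  then have "e * (w \<bullet> w) = 0" by (simp add: inner_add_right)
  then have "w = 0" using e by simp
  then show ?thesis using eq[OF assms(2)] unfolding w_def by simp
qed

lemma finite_closed_cover_has_interior:
  fixes F :: "'i \<Rightarrow> 'a::topological_space set"
  assumes "finite I" "\<And>j. j \<in> I \<Longrightarrow> closed (F j)" "open Q" "Q \<noteq> {}" "Q \<subseteq> (\<Union>j\<in>I. F j)"
  shows "\<exists>j\<in>I. \<exists>V. open V \<and> V \<noteq> {} \<and> V \<subseteq> F j \<inter> Q"
  using assms
proof (induction I arbitrary: Q rule: finite_induct)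
  case (insert j I)
  show ?case
  proof (cases "Q - F j = {}")
    case True
    then show ?thesis using insert.prems by blast
  next
    case False
    have "open (Q - F j)" using insert.prems by (intro open_Diff) auto
    moreover have "Q - F j \<subseteq> (\<Union>j\<in>I. F j)" using insert.prems by auto
    ultimately show ?thesis using insert.IH[of "Q - F j"] insert.prems False by blast
  qed
qed simp

lemma real_interval_chain:
  fixes P :: "real \<Rightarrow> real \<Rightarrow> bool"
  assumes trans: "\<And>u w v. u \<le> w \<Longrightarrow> w \<le> v \<Longrightarrow> P u w \<Longrightarrow> P w v \<Longrightarrow> P u v"
    and near: "\<And>t. \<exists>d>0. \<forall>s. dist s t < d \<longrightarrow> P s t \<and> P t s"
    and "a \<le> b"
  shows "P a b"
proof -
  define S where "S = {s. a \<le> s \<and> s \<le> b \<and> P a s}"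
  define s where "s = Sup S"
  have "P a a" using near[of a] by auto
  then have aS: "a \<in> S" using \<open>a \<le> b\<close> unfolding S_def by simp
  have bdd: "bdd_above S" unfolding S_def by (auto intro: bdd_aboveI[of _ b])
  have as: "a \<le> s" unfolding s_def using cSup_upper[OF aS bdd] .
  have sb: "s \<le> b" unfolding s_def S_def using aS by (intro cSup_least) (auto simp: S_def)
  obtain d where d: "d > 0" "\<And>r. dist r s < d \<Longrightarrow> P r s \<and> P s r" using near[of s] by blast
  obtain r where r: "r \<in> S" "s - d < r"
    using less_cSupE[of "s - d" S] aS d(1) unfolding s_def by auto
  have rs: "r \<le> s" unfolding s_def using cSup_upper[OF r(1) bdd] .
  then have "P r s" using d r(2) by (simp add: dist_real_def)
  then have Pas: "P a s" using trans[of a r s] r(1) rs unfolding S_def by blast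
  have "s = b"
  proof (rule ccontr)
    assume "s \<noteq> b"
    define s' where "s' = min b (s + d / 2)"
    have ss': "s < s'" "s' \<le> b" using sb \<open>s \<noteq> b\<close> d(1) unfolding s'_def by auto
    have "dist s' s < d" using ss' d(1) unfolding s'_def dist_real_def by auto
    then have "P a s'" using trans[of a s s'] Pas d(2) as ss' by auto
    then have "s' \<in> S" using as ss' unfolding S_def by simp
    then show False using cSup_upper[OF _ bdd] ss' unfolding s_def by fastforce
  qed
  then show ?thesis using Pas by simp
qed

lemma affine_nonneg_after_sign_change:
  fixes c0 c1 :: real
  assumes "u \<le> w" "w \<le> v" "c0 + u * c1 < 0" "0 \<le> c0 + w * c1"
  shows "0 \<le> c0 + v * c1"
proof -
  have "0 < (w - u) * c1" using assms(3,4) by (simp add: algebra_simps)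
  then have "0 < c1" using assms(1) by (simp add: zero_less_mult_iff)
  then have "0 \<le> (v - w) * c1" using assms(2) by simp
  then show ?thesis using assms(4) by (simp add: algebra_simps)
qed

lemma pieces_agree_near:
  fixes \<psi> :: "'a::metric_space \<Rightarrow> real" and \<phi> :: "nat \<Rightarrow> 'a \<Rightarrow> real"
  assumes "isCont \<psi> t" "\<And>j. isCont (\<phi> j) t" and pieces: "\<And>s. \<exists>j<k. \<psi> s = \<phi> j s"
  shows "\<exists>d>0. \<forall>s. dist s t < d \<longrightarrow> (\<exists>j<k. \<phi> j t = \<psi> t \<and> \<phi> j s = \<psi> s)"
proof -
  define J where "J = {j. j < k \<and> \<phi> j t \<noteq> \<psi> t}"
  have "eventually (\<lambda>s. \<phi> j s - \<psi> s \<noteq> 0) (at t)" if "j \<in> J" for j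
  proof (rule tendsto_imp_eventually_ne)
    show "((\<lambda>s. \<phi> j s - \<psi> s) \<longlongrightarrow> \<phi> j t - \<psi> t) (at t)"
      using assms(1,2) by (intro tendsto_diff) (simp_all add: isCont_def)
    show "\<phi> j t - \<psi> t \<noteq> 0" using that unfolding J_def by simp
  qed
  then have "eventually (\<lambda>s. \<forall>j\<in>J. \<phi> j s \<noteq> \<psi> s) (at t)"
    by (subst eventually_ball_finite_distrib) (auto simp: J_def)
  then obtain d where d: "d > 0" "\<And>s. s \<noteq> t \<Longrightarrow> dist s t < d \<Longrightarrow> \<forall>j\<in>J. \<phi> j s \<noteq> \<psi> s"
    unfolding eventually_at by blast
  have "\<exists>j<k. \<phi> j t = \<psi> t \<and> \<phi> j s = \<psi> s" if "dist s t < d" for s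
  proof -
    obtain j where j: "j < k" "\<psi> s = \<phi> j s" using pieces by blast
    then have "j \<notin> J" using d(2)[OF _ that] unfolding J_def by (cases "s = t") auto
    then show ?thesis using j unfolding J_def by auto
  qed
  then show ?thesis using d(1) by blast
qed

lemma line_pieces_crossing:
  fixes \<psi> :: "real \<Rightarrow> real" and \<alpha> \<beta> :: "nat \<Rightarrow> real"
  assumes cont: "\<And>t. isCont \<psi> t" and pieces: "\<And>t. \<exists>j<k. \<psi> t = \<alpha> j + t * \<beta> j"
  shows "\<exists>j<k. \<psi> 0 \<le> \<alpha> j \<and> \<alpha> j + \<beta> j \<le> \<psi> 1"
proof -
  define P where "P u v \<longleftrightarrow> (\<exists>j<k. \<psi> u \<le> \<alpha> j + u * \<beta> j \<and> \<alpha> j + v * \<beta> j \<le> \<psi> v)" for u v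
  have "P 0 1"
  proof (rule real_interval_chain)
    fix u w v :: real
    assume uwv: "u \<le> w" "w \<le> v" "P u w" "P w v"
    then obtain j1 j2 where j: "j1 < k" "\<psi> u \<le> \<alpha> j1 + u * \<beta> j1" "\<alpha> j1 + w * \<beta> j1 \<le> \<psi> w"
      "j2 < k" "\<psi> w \<le> \<alpha> j2 + w * \<beta> j2" "\<alpha> j2 + v * \<beta> j2 \<le> \<psi> v"
      unfolding P_def by blast
    show "P u v"
    proof (cases "\<psi> u \<le> \<alpha> j2 + u * \<beta> j2")
      case True
      then show ?thesis using j unfolding P_def by blast
    next
      case False
      have "0 \<le> (\<alpha> j2 - \<alpha> j1) + v * (\<beta> j2 - \<beta> j1)"
        using False j
        by (intro affine_nonneg_after_sign_change[OF uwv(1,2)]) (simp_all add: algebra_simps)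
      then show ?thesis using j unfolding P_def by (auto simp: algebra_simps)
    qed
  next
    fix t
    have "isCont (\<lambda>s. \<alpha> j + s * \<beta> j) t" for j by (intro continuous_intros)
    then show "\<exists>d>0. \<forall>s. dist s t < d \<longrightarrow> P s t \<and> P t s"
      using pieces_agree_near[where \<psi>=\<psi> and t=t and \<phi>="\<lambda>j s. \<alpha> j + s * \<beta> j" and k=k]
        cont pieces unfolding P_def by fastforce
  qed simp
  then show ?thesis unfolding P_def by simp
qed

lemma continuous_pieces_crossing:
  fixes p :: "'a::real_inner \<Rightarrow> real" and a :: "nat \<Rightarrow> 'a" and b :: "nat \<Rightarrow> real"
  assumes cont: "continuous_on UNIV p" and pieces: "\<And>x. \<exists>j<k. p x = a j \<bullet> x + b j"
  shows "\<exists>j<k. p y \<le> a j \<bullet> y + b j \<and> a j \<bullet> x + b j \<le> p x"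
proof -
  define \<psi> where "\<psi> t = p (y + t *\<^sub>R (x - y))" for t
  have "isCont \<psi> t" for t
  proof -
    have "isCont (\<lambda>t. y + t *\<^sub>R (x - y)) t" by (intro continuous_intros)
    moreover have "isCont p (y + t *\<^sub>R (x - y))"
      using cont by (simp add: continuous_on_eq_continuous_at)
    ultimately show ?thesis unfolding \<psi>_def by (rule isCont_o2)
  qed
  moreover have "\<exists>j<k. \<psi> t = (a j \<bullet> y + b j) + t * (a j \<bullet> (x - y))" for t
    using pieces[of "y + t *\<^sub>R (x - y)"] unfolding \<psi>_def
      by (auto simp: inner_add_right algebra_simps)
  ultimately obtain j where "j < k" "\<psi> 0 \<le> a j \<bullet> y + b j" "a j \<bullet> y + b j + a j \<bullet> (x - y) \<le> \<psi> 1"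
    using line_pieces_crossing[where \<alpha>="\<lambda>j. a j \<bullet> y + b j" and \<beta>="\<lambda>j. a j \<bullet> (x - y)"] by blast
  then show ?thesis unfolding \<psi>_def by (auto simp: inner_diff_right)
qed

section \<open>Max--min representation of a continuous function with finitely many affine pieces\<close>

lemma exists_nontrivial_vanishing_combination:
  fixes w :: "'e \<Rightarrow> 'a::euclidean_space"
  assumes "finite A" "card A > DIM('a)"
  shows "\<exists>l. (\<exists>e\<in>A. l e \<noteq> 0) \<and> (\<Sum>e\<in>A. l e *\<^sub>R w e) = 0"
proof (cases "inj_on w A")
  case False
  then obtain e1 e2 where e: "e1 \<in> A" "e2 \<in> A" "e1 \<noteq> e2" "w e1 = w e2" unfolding inj_on_def by blast
  define l where "l e = (if e = e1 then 1 else if e = e2 then -1 else (0::real))" for e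
  have "(\<Sum>e\<in>A. l e *\<^sub>R w e) =
      (\<Sum>e\<in>A. if e = e1 then w e1 else 0) + (\<Sum>e\<in>A. if e = e2 then - w e2 else 0)"
    unfolding sum.distrib[symmetric] by (rule sum.cong) (use e in \<open>auto simp: l_def\<close>)
  also have "\<dots> = 0" using e assms(1) by (simp add: sum.delta)
  finally show ?thesis using e(1) by (intro exI[of _ l]) (auto simp: l_def)
next
  case True
  have "dependent (w ` A)" by (rule dependent_biggerset) (use assms card_image[OF True] in simp)
  then obtain u where u: "\<exists>v\<in>w ` A. u v \<noteq> 0" "(\<Sum>v\<in>w ` A. u v *\<^sub>R v) = 0"
    using dependent_finite[of "w ` A"] assms(1) by auto
  moreover have "(\<Sum>e\<in>A. u (w e) *\<^sub>R w e) = (\<Sum>v\<in>w ` A. u v *\<^sub>R v)"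
    using sum.reindex[OF True, of "\<lambda>v. u v *\<^sub>R v"] by simp
  ultimately show ?thesis by (intro exI[of _ "\<lambda>e. u (w e)"]) auto
qed

lemma sum_pos_if_signs_agree:
  fixes l d :: "'e \<Rightarrow> real"
  assumes "finite A" "e0 \<in> A" "l e0 \<noteq> 0" and signs: "\<And>e. e \<in> A \<Longrightarrow> d e \<noteq> 0 \<and> (0 < d e \<longleftrightarrow> 0 < l e)"
  shows "0 < (\<Sum>e\<in>A. l e * d e)"
proof (rule sum_pos2[OF assms(1,2)])
  show "0 < l e0 * d e0" using signs[OF assms(2)] assms(3)
    by (cases "0 < l e0") (auto simp: zero_less_mult_iff)
  show "0 \<le> l e * d e" if "e \<in> A" for e using signs[OF that]
    by (cases "0 < l e") (auto simp: zero_le_mult_iff)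
qed

locale affine_pieces =
  fixes p :: "real^'n \<Rightarrow> real" and a :: "nat \<Rightarrow> real^'n" and b :: "nat \<Rightarrow> real" and k :: nat
  assumes continuous: "continuous_on UNIV p"
    and pieces: "\<And>x. \<exists>j<k. p x = a j \<bullet> x + b j"
    and distinct_pieces: "\<And>i j. i < k \<Longrightarrow> j < k \<Longrightarrow> i \<noteq> j \<Longrightarrow> (a i, b i) \<noteq> (a j, b j)"
begin

definition piece :: "nat \<Rightarrow> real^'n \<Rightarrow> real" where
  "piece j x = a j \<bullet> x + b j"

definition generic_points :: "(real^'n) set" where
  "generic_points = {x. \<forall>i<k. \<forall>j<k. i \<noteq> j \<longrightarrow> piece i x \<noteq> piece j x}"

definition order_pattern :: "real^'n \<Rightarrow> (nat \<times> nat) set" where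
  "order_pattern x = {(i, j). i < k \<and> j < k \<and> piece i x < piece j x}"

definition pieces_above :: "real^'n \<Rightarrow> nat set" where
  "pieces_above x = {j. j < k \<and> p x \<le> piece j x}"

lemma continuous_piece: "continuous_on UNIV (piece j)"
  unfolding piece_def by (intro continuous_intros)

lemma num_pieces_pos: "0 < k"
proof -
  obtain j where "j < k" using pieces by blast
  then show ?thesis by simp
qed

lemma generic_points_dense:
  assumes "open U" "U \<noteq> {}"
  shows "U \<inter> generic_points \<noteq> {}"
proof
  assume empty: "U \<inter> generic_points = {}"
  define I where "I = {(i, j). i < k \<and> j < k \<and> i \<noteq> j}"
  define Z where "Z ij = {x. piece (fst ij) x = piece (snd ij) x}" for ij
  have fin: "finite I" by (rule finite_subset[of _ "{..<k} \<times> {..<k}"]) (auto simp: I_def)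
  have closed: "closed (Z ij)" for ij
    unfolding Z_def piece_def by (intro closed_Collect_eq continuous_intros)
  have cover: "U \<subseteq> (\<Union>ij\<in>I. Z ij)"
  proof
    fix x assume "x \<in> U"
    then have "x \<notin> generic_points" using empty by blast
    then obtain i j where "i < k" "j < k" "i \<noteq> j" "piece i x = piece j x"
      unfolding generic_points_def by blast
    then show "x \<in> (\<Union>ij\<in>I. Z ij)" unfolding I_def Z_def by (intro UN_I[of "(i, j)"]) auto
  qed
  obtain ij V x0 where ij: "ij \<in> I" "open V" "x0 \<in> V" "V \<subseteq> Z ij"
    using finite_closed_cover_has_interior[OF fin closed assms cover] by blast
  have "a (fst ij) = a (snd ij) \<and> b (fst ij) = b (snd ij)"
    by (rule affine_eq_on_open[OF ij(2,3)]) (use ij(4) in \<open>auto simp: Z_def piece_def\<close>)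
  then show False using distinct_pieces ij(1) unfolding I_def by auto
qed

lemma pieces_above_eq_pattern:
  assumes "\<alpha> < k" "p y = piece \<alpha> y"
  shows "pieces_above y = {j. j < k \<and> (j, \<alpha>) \<notin> order_pattern y}"
  using assms unfolding pieces_above_def order_pattern_def by auto

text \<open>Both sets are upper sets of the one linear order of the pieces that the pattern describes.\<close>
lemma pieces_above_nested:
  assumes "order_pattern y = order_pattern y'"
  shows "pieces_above y \<subseteq> pieces_above y' \<or> pieces_above y' \<subseteq> pieces_above y"
proof -
  obtain \<alpha> where \<alpha>: "\<alpha> < k" "p y = piece \<alpha> y"
    using pieces[of y] unfolding piece_def by blast
  obtain \<alpha>' where \<alpha>': "\<alpha>' < k" "p y' = piece \<alpha>' y'"
    using pieces[of y'] unfolding piece_def by blast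
  have upper: "pieces_above z = {j. j < k \<and> piece \<beta> y' \<le> piece j y'}"
    if "\<beta> < k" "p z = piece \<beta> z" "order_pattern z = order_pattern y'" for z \<beta>
  proof -
    have "pieces_above z = {j. j < k \<and> (j, \<beta>) \<notin> order_pattern y'}"
      using pieces_above_eq_pattern[OF that(1,2)] that(3) by simp
    also have "\<dots> = {j. j < k \<and> piece \<beta> y' \<le> piece j y'}"
      using that(1) unfolding order_pattern_def by auto
    finally show ?thesis .
  qed
  show ?thesis
    unfolding upper[OF \<alpha> assms] upper[OF \<alpha>' refl] by (cases "piece \<alpha> y' \<le> piece \<alpha>' y'") auto
qed

text \<open>Among the points of one order pattern the sets \<open>pieces_above\<close> form a chain, so the one
  of least cardinality is the least one.\<close>
definition min_term :: "(nat \<times> nat) set \<Rightarrow> nat set" where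
  "min_term \<sigma> = arg_min_on card (pieces_above ` {y \<in> generic_points. order_pattern y = \<sigma>})"

definition terms :: "nat set set" where
  "terms = min_term ` order_pattern ` generic_points"

lemma min_term_props:
  assumes "y \<in> generic_points"
  shows "min_term (order_pattern y) \<in>
    pieces_above ` {y' \<in> generic_points. order_pattern y' = order_pattern y}"
    and "min_term (order_pattern y) \<subseteq> pieces_above y"
proof -
  define C where "C = pieces_above ` {y' \<in> generic_points. order_pattern y' = order_pattern y}"
  have "C \<subseteq> Pow {..<k}" unfolding C_def pieces_above_def by auto
  then have "finite C" by (rule finite_subset) simp
  moreover have y: "pieces_above y \<in> C" using assms unfolding C_def by blast
  ultimately have min: "min_term (order_pattern y) \<in> C"
    "\<not> card (pieces_above y) < card (min_term (order_pattern y))"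
    using arg_min_if_finite[of C card] unfolding min_term_def C_def[symmetric] by blast+
  show "min_term (order_pattern y) \<in> C" using min(1) unfolding C_def .
  obtain y' where y': "order_pattern y' = order_pattern y"
    "min_term (order_pattern y) = pieces_above y'"
    using min(1) unfolding C_def by blast
  have "finite (pieces_above y')" unfolding pieces_above_def by simp
  then show "min_term (order_pattern y) \<subseteq> pieces_above y"
    using pieces_above_nested[OF y'(1)] min(2) y'(2) by (metis card_seteq not_less)
qed

lemma term_props:
  assumes "S \<in> terms"
  shows "\<exists>y\<in>generic_points. S = pieces_above y" and "S \<noteq> {}" and "S \<subseteq> {..<k}" and "finite S"
proof -
  obtain y where y: "y \<in> generic_points" "S = pieces_above y"
    using assms min_term_props(1) unfolding terms_def by blast
  then show "\<exists>y\<in>generic_points. S = pieces_above y" by blast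
  obtain j where "j < k" "p y = piece j y" using pieces unfolding piece_def by blast
  then have "j \<in> S" unfolding y(2) pieces_above_def by simp
  then show "S \<noteq> {}" by blast
  show "S \<subseteq> {..<k}" unfolding y(2) pieces_above_def by auto
  then show "finite S" by (rule finite_subset) simp
qed

lemma finite_terms: "finite terms"
proof (rule finite_subset)
  show "terms \<subseteq> Pow {..<k}" using term_props(3) by blast
qed simp

lemma terms_nonempty: "terms \<noteq> {}"
  using generic_points_dense[of UNIV] unfolding terms_def by auto

lemma Min_term_le:
  assumes "S \<in> terms"
  shows "Min ((\<lambda>j. piece j x) ` S) \<le> p x"
proof -
  obtain y where y: "S = pieces_above y" using term_props(1)[OF assms] by blast
  obtain j where j: "j < k" "p y \<le> piece j y" "piece j x \<le> p x"
    using continuous_pieces_crossing[OF continuous pieces] unfolding piece_def by blast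
  then have "j \<in> S" unfolding y pieces_above_def by simp
  then have "Min ((\<lambda>j. piece j x) ` S) \<le> piece j x"
    using term_props(4)[OF assms] by simp
  then show ?thesis using j by simp
qed

text \<open>The points at which no term lies entirely above \<open>p\<close> form an open set; a generic point
  among them would contradict \<open>min_term_props\<close>.\<close>
lemma exists_term_above: "\<exists>S\<in>terms. \<forall>j\<in>S. p x \<le> piece j x"
proof (rule ccontr)
  assume none: "\<not> ?thesis"
  define C where "C S = {z. \<forall>j\<in>S. p z \<le> piece j z}" for S
  have "closed (C S)" for S
  proof -
    have "C S = (\<Inter>j\<in>S. {z. p z \<le> piece j z})" unfolding C_def by auto
    moreover have "closed {z. p z \<le> piece j z}" for j
      by (rule closed_Collect_le[OF continuous continuous_piece])
    ultimately show ?thesis by auto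
  qed
  then have "open (- (\<Union>S\<in>terms. C S))" using finite_terms by (intro open_Compl closed_UN) auto
  moreover have "x \<in> - (\<Union>S\<in>terms. C S)" using none unfolding C_def by auto
  ultimately have "- (\<Union>S\<in>terms. C S) \<inter> generic_points \<noteq> {}"
    by (intro generic_points_dense) auto
  then obtain z where z: "z \<in> - (\<Union>S\<in>terms. C S)" "z \<in> generic_points" by blast
  have "min_term (order_pattern z) \<in> terms" using z(2) unfolding terms_def by simp
  moreover have "z \<in> C (min_term (order_pattern z))"
    using min_term_props(2)[OF z(2)] unfolding C_def pieces_above_def by auto
  ultimately have "z \<in> (\<Union>S\<in>terms. C S)" by (rule UN_I)
  then show False using z(1) by simp
qed

lemma max_min_terms: "p x = Max ((\<lambda>S. Min ((\<lambda>j. piece j x) ` S)) ` terms)"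
proof (rule antisym)
  obtain S where S: "S \<in> terms" "\<forall>j\<in>S. p x \<le> piece j x" using exists_term_above by blast
  then have "p x \<le> Min ((\<lambda>j. piece j x) ` S)" using term_props(2,4)[OF S(1)] by simp
  also have "\<dots> \<le> Max ((\<lambda>S. Min ((\<lambda>j. piece j x) ` S)) ` terms)"
    using S(1) finite_terms by simp
  finally show "p x \<le> Max ((\<lambda>S. Min ((\<lambda>j. piece j x) ` S)) ` terms)" .
  show "Max ((\<lambda>S. Min ((\<lambda>j. piece j x) ` S)) ` terms) \<le> p x"
    using Min_term_le finite_terms terms_nonempty by simp
qed

lemma card_terms_le: "card terms \<le> card (order_pattern ` generic_points)"
  unfolding terms_def
  by (rule card_image_le, rule finite_subset[of _ "Pow ({..<k} \<times> {..<k})"])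
    (auto simp: order_pattern_def)

text \<open>Outside \<open>{..<k}\<close> the rank is the identity, as \<open>permutes\<close> requires.\<close>
definition piece_rank :: "real^'n \<Rightarrow> nat \<Rightarrow> nat" where
  "piece_rank y j = (if j < k then card {i. i < k \<and> piece i y < piece j y} else j)"

lemma piece_rank_less_iff:
  assumes "y \<in> generic_points" "i < k" "j < k"
  shows "piece_rank y i < piece_rank y j \<longleftrightarrow> piece i y < piece j y"
proof -
  have mono: "piece_rank y i < piece_rank y j" if "piece i y < piece j y" "i < k" "j < k" for i j
  proof -
    have "{l. l < k \<and> piece l y < piece i y} \<subset> {l. l < k \<and> piece l y < piece j y}"
      using that by auto
    then show ?thesis using that unfolding piece_rank_def by (simp add: psubset_card_mono)
  qed
  show ?thesis
  proof
    assume r: "piece_rank y i < piece_rank y j"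
    then have "i \<noteq> j" by auto
    then have "piece i y \<noteq> piece j y" using assms unfolding generic_points_def by blast
    moreover have "\<not> piece j y < piece i y" using mono[of j i] r assms(2,3) by auto
    ultimately show "piece i y < piece j y" by linarith
  qed (use mono assms in blast)
qed

lemma piece_rank_permutes:
  assumes "y \<in> generic_points"
  shows "piece_rank y permutes {..<k}"
proof (rule bij_imp_permutes)
  have inj: "inj_on (piece_rank y) {..<k}"
  proof (rule inj_onI)
    fix i j assume ij: "i \<in> {..<k}" "j \<in> {..<k}" "piece_rank y i = piece_rank y j"
    show "i = j"
    proof (rule ccontr)
      assume "i \<noteq> j"
      then have "piece i y < piece j y \<or> piece j y < piece i y"
        using assms ij unfolding generic_points_def by (auto simp: neq_iff)
      then show False
        using piece_rank_less_iff[OF assms, of i j] piece_rank_less_iff[OF assms, of j i] ij by auto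
    qed
  qed
  have "piece_rank y j < k" if "j < k" for j
  proof -
    have "{i. i < k \<and> piece i y < piece j y} \<subset> {..<k}" using that by auto
    then have "card {i. i < k \<and> piece i y < piece j y} < card {..<k::nat}"
      by (rule psubset_card_mono[OF finite_lessThan])
    then show ?thesis using that unfolding piece_rank_def by simp
  qed
  then have "piece_rank y ` {..<k} = {..<k}"
    using card_image[OF inj] by (intro card_seteq) auto
  then show "bij_betw (piece_rank y) {..<k} {..<k}" using inj unfolding bij_betw_def by blast
qed (simp add: piece_rank_def)

lemma card_order_patterns_le_fact: "card (order_pattern ` generic_points) \<le> fact k"
proof -
  define F where "F r = {(i, j). i < k \<and> j < k \<and> r i < r j}" for r :: "nat \<Rightarrow> nat"
  have "order_pattern y = F (piece_rank y)" if "y \<in> generic_points" for y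
    unfolding order_pattern_def F_def using piece_rank_less_iff[OF that] by auto
  then have "order_pattern ` generic_points \<subseteq> F ` {r. r permutes {..<k}}"
    using piece_rank_permutes by blast
  then have "card (order_pattern ` generic_points) \<le> card (F ` {r. r permutes {..<k}})"
    by (rule card_mono[rotated]) (simp add: finite_permutations)
  also have "\<dots> \<le> card {r. r permutes {..<k}}"
    by (rule card_image_le) (simp add: finite_permutations)
  also have "\<dots> = fact k" by (simp add: card_permutations)
  finally show ?thesis .
qed

lemma order_pattern_by_ordered_pairs:
  assumes "y \<in> generic_points"
  shows "(i, j) \<in> order_pattern y \<longleftrightarrow>
    (i < j \<and> (i, j) \<in> order_pattern y \<inter> ordered_pairs k) \<or>
    (j < i \<and> i < k \<and> (j, i) \<notin> order_pattern y \<inter> ordered_pairs k)"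
proof -
  have "piece i y \<noteq> piece j y" if "i < k" "j < k" "i \<noteq> j"
    using assms that unfolding generic_points_def by blast
  then show ?thesis unfolding order_pattern_def ordered_pairs_def
    by (cases i j rule: linorder_cases) auto
qed

lemma inj_on_restrict_ordered_pairs:
  "inj_on (\<lambda>\<sigma>. \<sigma> \<inter> ordered_pairs k) (order_pattern ` generic_points)"
proof (rule inj_onI, clarify)
  fix y y' assume y: "y \<in> generic_points" "y' \<in> generic_points"
    and eq: "order_pattern y \<inter> ordered_pairs k = order_pattern y' \<inter> ordered_pairs k"
  show "order_pattern y = order_pattern y'"
  proof (rule set_eqI, clarify)
    fix i j
    show "(i, j) \<in> order_pattern y \<longleftrightarrow> (i, j) \<in> order_pattern y'"
      unfolding order_pattern_by_ordered_pairs[OF y(1)]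
        order_pattern_by_ordered_pairs[OF y(2)] eq ..
  qed
qed

lemma shattered_sign_pattern:
  assumes "A \<subseteq> ordered_pairs k"
    "shatters ((\<lambda>\<sigma>. \<sigma> \<inter> ordered_pairs k) ` order_pattern ` generic_points) A"
    and "B \<subseteq> A"
  obtains y where "y \<in> generic_points" "\<And>e. e \<in> A \<Longrightarrow> e \<in> B \<longleftrightarrow> piece (fst e) y < piece (snd e) y"
proof -
  obtain y where y: "y \<in> generic_points" "order_pattern y \<inter> ordered_pairs k \<inter> A = B"
    using assms(2,3) unfolding shatters_def by blast
  have "e \<in> B \<longleftrightarrow> piece (fst e) y < piece (snd e) y" if "e \<in> A" for e
    using that assms(1) y(2) unfolding order_pattern_def ordered_pairs_def by auto
  then show ?thesis using that y(1) by blast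
qed

lemma sum_piece_differences:
  assumes "(\<Sum>e\<in>A. l e *\<^sub>R (a (snd e) - a (fst e))) = 0"
  shows "(\<Sum>e\<in>A. l e * (piece (snd e) y - piece (fst e) y)) = (\<Sum>e\<in>A. l e * (b (snd e) - b (fst e)))"
proof -
  have "(\<Sum>e\<in>A. l e * (piece (snd e) y - piece (fst e) y)) =
      (\<Sum>e\<in>A. l e *\<^sub>R (a (snd e) - a (fst e))) \<bullet> y + (\<Sum>e\<in>A. l e * (b (snd e) - b (fst e)))"
    by (simp add: piece_def inner_sum_left inner_diff_left sum.distrib[symmetric] algebra_simps)
  then show ?thesis using assms by simp
qed

text \<open>A vanishing combination of the \<open>n + 1\<close> slopes \<open>a\<^sub>j - a\<^sub>i\<close> makes the same combination of
  the differences \<open>piece j - piece i\<close> constant, so it cannot take both signs; but shattering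
  realizes both the set of positive coefficients and its complement.\<close>
lemma card_shattered_le_dim:
  assumes A: "A \<subseteq> ordered_pairs k"
    and sh: "shatters ((\<lambda>\<sigma>. \<sigma> \<inter> ordered_pairs k) ` order_pattern ` generic_points) A"
  shows "card A \<le> CARD('n)"
proof (rule ccontr)
  assume "\<not> card A \<le> CARD('n)"
  then obtain A' where A': "A' \<subseteq> A" "card A' = Suc CARD('n)"
    using obtain_subset_with_card_n[of "Suc CARD('n)" A] by force
  then have fin: "finite A'" by (simp add: card_ge_0_finite)
  have A'_pairs: "A' \<subseteq> ordered_pairs k" using A A' by blast
  have sh': "shatters ((\<lambda>\<sigma>. \<sigma> \<inter> ordered_pairs k) ` order_pattern ` generic_points) A'"
    by (rule shatters_subset[OF sh A'(1)])
  obtain l e0 where l: "e0 \<in> A'" "l e0 \<noteq> 0" "(\<Sum>e\<in>A'. l e *\<^sub>R (a (snd e) - a (fst e))) = 0"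
    using exists_nontrivial_vanishing_combination[OF fin, of "\<lambda>e. a (snd e) - a (fst e)"]
      A'(2) by auto
  define d where "d y e = piece (snd e) y - piece (fst e) y" for y e
  have d_ne: "d y e \<noteq> 0" if "y \<in> generic_points" "e \<in> A'" for y e
    using that A'_pairs unfolding d_def generic_points_def ordered_pairs_def by force
  obtain y1 where y1: "y1 \<in> generic_points" "\<And>e. e \<in> A' \<Longrightarrow> e \<in> {e \<in> A'. 0 < l e} \<longleftrightarrow> 0 < d y1 e"
    using shattered_sign_pattern[OF A'_pairs sh', of "{e \<in> A'. 0 < l e}"] unfolding d_def by auto
  obtain y2 where y2: "y2 \<in> generic_points" "\<And>e. e \<in> A' \<Longrightarrow> e \<in> {e \<in> A'. l e \<le> 0} \<longleftrightarrow> 0 < d y2 e"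
    using shattered_sign_pattern[OF A'_pairs sh', of "{e \<in> A'. l e \<le> 0}"] unfolding d_def by auto
  have "0 < (\<Sum>e\<in>A'. l e * d y1 e)"
    using y1 d_ne[OF y1(1)]
    by (intro sum_pos_if_signs_agree[where l = l and d = "d y1", OF fin l(1,2)]) auto
  moreover have "0 < (\<Sum>e\<in>A'. l e * - d y2 e)"
  proof (intro sum_pos_if_signs_agree[where l = l and d = "\<lambda>e. - d y2 e", OF fin l(1,2)])
    fix e assume "e \<in> A'"
    then have "l e \<le> 0 \<longleftrightarrow> 0 < d y2 e" "d y2 e \<noteq> 0" using y2(2) d_ne[OF y2(1)] by auto
    then show "- d y2 e \<noteq> 0 \<and> (0 < - d y2 e \<longleftrightarrow> 0 < l e)" by (smt (verit))
  qed
  moreover have "(\<Sum>e\<in>A'. l e * d y e) = (\<Sum>e\<in>A'. l e * (b (snd e) - b (fst e)))" for y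
    unfolding d_def by (rule sum_piece_differences[OF l(3)])
  ultimately show False by (simp add: sum_negf)
qed

lemma card_order_patterns_le_binomial_sum:
  "card (order_pattern ` generic_points) \<le> (\<Sum>i\<le>CARD('n). ((k ^ 2 - k) div 2) choose i)"
proof -
  have "card (order_pattern ` generic_points) =
    card ((\<lambda>\<sigma>. \<sigma> \<inter> ordered_pairs k) ` order_pattern ` generic_points)"
    using card_image[OF inj_on_restrict_ordered_pairs] by simp
  also have "\<dots> \<le> (\<Sum>i\<le>CARD('n). card (ordered_pairs k) choose i)"
    by (rule sauer_shelah[OF finite_ordered_pairs]) (auto intro: card_shattered_le_dim)
  finally show ?thesis by (simp add: card_ordered_pairs)
qed

lemma card_terms_le_phi: "card terms \<le> phi CARD('n) k"
  using card_terms_le card_order_patterns_le_fact card_order_patterns_le_binomial_sum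
  unfolding phi_def by simp

text \<open>Each term is padded to exactly \<open>k\<close> indices by repeating its least element, so that all
  minima range over blocks of the same size.\<close>
lemma max_min_representation:
  "\<exists>M idx. 1 \<le> M \<and> M \<le> phi CARD('n) k \<and>
    (\<forall>x. p x = Max ((\<lambda>g. Min ((\<lambda>i. a (idx g i) \<bullet> x + b (idx g i)) ` {..<k})) ` {..<M}))"
proof -
  define M where "M = card terms"
  have M: "1 \<le> M" using finite_terms terms_nonempty unfolding M_def
    by (simp add: Suc_le_eq card_gt_0_iff)
  obtain T where T: "bij_betw T {..<M} terms"
    using ex_bij_betw_nat_finite[OF finite_terms] unfolding M_def atLeast0LessThan by blast
  define idx where "idx g i = (if i \<in> T g then i else Min (T g))" for g i
  have idx: "idx g ` {..<k} = T g" if "g < M" for g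
  proof -
    have "T g \<in> terms" using T that unfolding bij_betw_def by blast
    then have "Min (T g) \<in> T g" "T g \<subseteq> {..<k}" using term_props(2-4) by auto
    then show ?thesis unfolding idx_def by auto
  qed
  have "p x = Max ((\<lambda>g. Min ((\<lambda>i. a (idx g i) \<bullet> x + b (idx g i)) ` {..<k})) ` {..<M})" for x
  proof -
    have "(\<lambda>i. a (idx g i) \<bullet> x + b (idx g i)) ` {..<k} = (\<lambda>j. piece j x) ` T g" if "g < M" for g
    proof -
      have "(\<lambda>i. a (idx g i) \<bullet> x + b (idx g i)) ` {..<k} = (\<lambda>j. piece j x) ` idx g ` {..<k}"
        by (simp add: image_image piece_def)
      then show ?thesis using idx[OF that] by simp
    qed
    then have "(\<lambda>g. Min ((\<lambda>i. a (idx g i) \<bullet> x + b (idx g i)) ` {..<k})) ` {..<M} =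
        (\<lambda>S. Min ((\<lambda>j. piece j x) ` S)) ` T ` {..<M}"
      by (simp add: image_image)
    also have "T ` {..<M} = terms" using T unfolding bij_betw_def by blast
    finally show ?thesis using max_min_terms by simp
  qed
  then show ?thesis using M card_terms_le_phi unfolding M_def by blast
qed

end

section \<open>Linear components of a CPWL function\<close>

lemma cpwl_cover_nonempty: "cpwl_cover p m U \<Longrightarrow> 0 < m"
  unfolding cpwl_cover_def by (cases m) auto

lemma cpwl_cover_delete:
  assumes cover: "cpwl_cover p m U" and i: "i < m" and rest: "(\<Union>j\<in>{..<m} - {i}. U j) = UNIV"
  shows "cpwl_cover p (m - 1) (\<lambda>j. U (if j < i then j else Suc j))"
proof -
  define s where "s j = (if j < i then j else Suc j)" for j
  have s: "s j < m \<and> s j \<noteq> i" if "j < m - 1" for j using that i unfolding s_def by auto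
  have onto: "\<exists>j'<m - 1. s j' = j" if "j < m" "j \<noteq> i" for j
  proof (cases "j < i")
    case True
    then show ?thesis using that i unfolding s_def by (intro exI[of _ j]) auto
  next
    case False
    then show ?thesis using that unfolding s_def by (intro exI[of _ "j - 1"]) auto
  qed
  have "x \<in> (\<Union>j<m - 1. U (s j))" for x
  proof -
    obtain j where "j < m" "j \<noteq> i" "x \<in> U j" using rest by blast
    moreover obtain j' where "j' < m - 1" "s j' = j" using onto calculation(1,2) by blast
    ultimately show ?thesis by blast
  qed
  then have "(\<Union>j<m - 1. U (s j)) = UNIV" by blast
  then show ?thesis using cover s unfolding cpwl_cover_def s_def[symmetric] by auto
qed

text \<open>If a member of a minimum cover had empty interior, the closed union of the others would
  contain its dense complement and hence everything, so it could be dropped.\<close>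
lemma min_cover_member_has_interior:
  assumes cover: "cpwl_cover p (min_cover_size p) U" and i: "i < min_cover_size p"
  shows "interior (U i) \<noteq> {}"
proof
  assume empty: "interior (U i) = {}"
  define m where "m = min_cover_size p"
  have "closed (\<Union>j\<in>{..<m} - {i}. U j)"
    using cover unfolding cpwl_cover_def m_def by (intro closed_UN) auto
  moreover have "- U i \<subseteq> (\<Union>j\<in>{..<m} - {i}. U j)"
    using cover unfolding cpwl_cover_def m_def by auto
  ultimately have "closure (- U i) \<subseteq> (\<Union>j\<in>{..<m} - {i}. U j)" by (rule closure_minimal[rotated])
  then have "(\<Union>j\<in>{..<m} - {i}. U j) = UNIV" using empty by (auto simp: closure_complement)
  then have "cpwl_cover p (m - 1) (\<lambda>j. U (if j < i then j else Suc j))"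
    using cpwl_cover_delete[OF cover i] unfolding m_def by simp
  then have "\<exists>V. cpwl_cover p (m - 1) V" by blast
  then have "m \<le> m - 1" unfolding m_def min_cover_size_def by (rule Least_le)
  then show False using i unfolding m_def by simp
qed

lemma affine_fun_eq_on_open:
  assumes "affine_fun f" "affine_fun g" "open W" "x0 \<in> W" "\<And>x. x \<in> W \<Longrightarrow> f x = g x"
  shows "f = g"
proof -
  obtain a b c d where "\<And>x. f x = a \<bullet> x + b" "\<And>x. g x = c \<bullet> x + d"
    using assms(1,2) unfolding affine_fun_def by blast
  moreover from this have "a = c \<and> b = d" using affine_eq_on_open[OF assms(3,4)] assms(5) by metis
  ultimately show ?thesis by auto
qed

lemma linear_components_eq_image:
  assumes U: "cpwl_cover p (min_cover_size p) U"
    and f: "\<And>i. i < min_cover_size p \<Longrightarrow> affine_fun (f i) \<and> (\<forall>x\<in>U i. p x = f i x)"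
  shows "linear_components p = f ` {..<min_cover_size p}"
proof
  show "f ` {..<min_cover_size p} \<subseteq> linear_components p"
  proof
    fix g assume "g \<in> f ` {..<min_cover_size p}"
    then obtain i where "i < min_cover_size p" "g = f i" by blast
    then show "g \<in> linear_components p"
      unfolding linear_components_def using U f
      by (intro CollectI conjI exI[of _ U] exI[of _ "{i}"]) auto
  qed
  show "linear_components p \<subseteq> f ` {..<min_cover_size p}"
  proof
    fix g assume "g \<in> linear_components p"
    then obtain V S where g: "affine_fun g" "cpwl_cover p (min_cover_size p) V"
        "S \<subseteq> {..<min_cover_size p}" "S \<noteq> {}" "\<forall>x\<in>(\<Union>i\<in>S. V i). p x = g x"
      unfolding linear_components_def by blast
    obtain i where i: "i \<in> S" using g(4) by blast
    have "interior (V i) \<noteq> {}"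
      using min_cover_member_has_interior[OF g(2)] g(3) i by blast
    moreover have "\<And>j. j \<in> {..<min_cover_size p} \<Longrightarrow> closed (U j)"
      and "interior (V i) \<subseteq> (\<Union>j\<in>{..<min_cover_size p}. U j)"
      using U unfolding cpwl_cover_def by auto
    ultimately obtain j W x0 where j: "j \<in> {..<min_cover_size p}" "open W" "x0 \<in> W"
      "W \<subseteq> U j \<inter> interior (V i)"
      using finite_closed_cover_has_interior[OF finite_lessThan _ open_interior] by blast
    have "g x = f j x" if "x \<in> W" for x
    proof -
      have "x \<in> U j" "x \<in> V i" using that j(4) interior_subset by blast+
      then have "p x = g x" "p x = f j x" using g(5) i f[of j] j(1) by auto
      then show ?thesis by simp
    qed
    then have "g = f j" using affine_fun_eq_on_open[OF g(1) _ j(2,3)] f j(1) by blast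
    then show "g \<in> f ` {..<min_cover_size p}" using j(1) by blast
  qed
qed

lemma cpwl_linear_components:
  assumes "is_cpwl p"
  shows "finite (linear_components p)" "linear_components p \<noteq> {}"
    and "\<And>f. f \<in> linear_components p \<Longrightarrow> affine_fun f"
    and "\<And>x. \<exists>f\<in>linear_components p. p x = f x"
proof -
  have "\<exists>m U. cpwl_cover p m U" using assms unfolding is_cpwl_def by blast
  then have "\<exists>U. cpwl_cover p (min_cover_size p) U" unfolding min_cover_size_def by (rule LeastI_ex)
  then obtain U where U: "cpwl_cover p (min_cover_size p) U" by blast
  then have "\<forall>i. \<exists>f. i < min_cover_size p \<longrightarrow> affine_fun f \<and> (\<forall>x\<in>U i. p x = f x)"
    unfolding cpwl_cover_def by blast
  from choice[OF this] obtain f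
    where f: "\<And>i. i < min_cover_size p \<Longrightarrow> affine_fun (f i) \<and> (\<forall>x\<in>U i. p x = f i x)"
    by blast
  have LC: "linear_components p = f ` {..<min_cover_size p}"
    by (rule linear_components_eq_image[OF U f])
  show "finite (linear_components p)" unfolding LC by simp
  show "linear_components p \<noteq> {}" unfolding LC using cpwl_cover_nonempty[OF U] by auto
  show "affine_fun g" if "g \<in> linear_components p" for g using that f unfolding LC by auto
  show "\<exists>f\<in>linear_components p. p x = f x" for x
  proof -
    obtain i where "i < min_cover_size p" "x \<in> U i" using U unfolding cpwl_cover_def by blast
    then show ?thesis using f unfolding LC by blast
  qed
qed

lemma enumerate_affine_funs:
  fixes F :: "(real^'n \<Rightarrow> real) set"
  assumes "finite F" "\<And>f. f \<in> F \<Longrightarrow> affine_fun f"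
  obtains a b where "F = (\<lambda>j x. a j \<bullet> x + b j) ` {..<card F}"
    and "\<And>i j. i < card F \<Longrightarrow> j < card F \<Longrightarrow> i \<noteq> j \<Longrightarrow> (a i, b i) \<noteq> (a j, b j)"
proof -
  obtain e where e: "bij_betw e {..<card F} F"
    using ex_bij_betw_nat_finite[OF assms(1)] unfolding atLeast0LessThan by blast
  have "\<forall>j. \<exists>ab. j < card F \<longrightarrow> (\<forall>x. e j x = fst ab \<bullet> x + snd ab)"
    using e assms(2) unfolding bij_betw_def affine_fun_def by fastforce
  from choice[OF this] obtain ab where ab: "\<And>j x. j < card F \<Longrightarrow> e j x = fst (ab j) \<bullet> x + snd (ab j)"
    by blast
  have e_eq: "e j = (\<lambda>x. fst (ab j) \<bullet> x + snd (ab j))" if "j < card F" for j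
    using ab[OF that] by blast
  have "F = (\<lambda>j x. fst (ab j) \<bullet> x + snd (ab j)) ` {..<card F}"
    using e e_eq unfolding bij_betw_def by (auto simp: image_iff)
  moreover have "(fst (ab i), snd (ab i)) \<noteq> (fst (ab j), snd (ab j))"
    if "i < card F" "j < card F" "i \<noteq> j" for i j
    using e that e_eq[OF that(1)] e_eq[OF that(2)] unfolding bij_betw_def inj_on_def by auto
  ultimately show ?thesis by (rule that)
qed

lemma cpwl_affine_pieces:
  assumes "is_cpwl p"
  obtains a b where "affine_pieces p a b (num_components p)"
proof -
  obtain a b where ab: "linear_components p = (\<lambda>j x. a j \<bullet> x + b j) ` {..<num_components p}"
    and distinct: "\<And>i j. i < num_components p \<Longrightarrow> j < num_components p \<Longrightarrow> i \<noteq> j \<Longrightarrow>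
      (a i, b i) \<noteq> (a j, b j)"
    using enumerate_affine_funs[OF cpwl_linear_components(1,3)[OF assms]]
      unfolding num_components_def by blast
  have "\<exists>j<num_components p. p x = a j \<bullet> x + b j" for x
    using cpwl_linear_components(4)[OF assms, of x] unfolding ab by auto
  then have "affine_pieces p a b (num_components p)"
    using assms distinct unfolding affine_pieces_def is_cpwl_def by blast
  then show ?thesis by (rule that)
qed

section \<open>ReLU networks computing a maximum of minima\<close>

text \<open>The affine map on the \<open>m\<close> inputs is left existential, so that prepending a hidden layer
  can absorb the new layer's output weights into it.\<close>
definition net_computes :: "nat list \<Rightarrow> ((nat \<Rightarrow> nat \<Rightarrow> real) \<times> (nat \<Rightarrow> real)) list \<Rightarrow> nat
    \<Rightarrow> ((nat \<Rightarrow> real) \<Rightarrow> real) \<Rightarrow> bool" where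
  "net_computes ks Ls m F \<longleftrightarrow> relu_net_wf ks Ls \<and>
     (\<exists>A a0. \<forall>v. eval_layers ks Ls (\<lambda>j. (\<Sum>i<m. A j i * v i) + a0 j) 0 = F v)"

lemma sum_delta_lessThan:
  "(\<Sum>i<(m::nat). of_bool (i = a) * (v i :: real)) = (if a < m then v a else 0)"
proof -
  have "(\<Sum>i<m. of_bool (i = a) * v i) = (\<Sum>i<m. if a = i then v i else 0)"
    by (rule sum.cong) auto
  also have "\<dots> = (if a \<in> {..<m} then v a else 0)"
    by (subst sum.delta') auto
  finally show ?thesis by simp
qed

lemma net_computes_first_input:
  assumes "m \<ge> 1"
  shows "net_computes [] [] m (\<lambda>v. v 0)"
  unfolding net_computes_def relu_net_wf_def
  using assms by (intro conjI exI[of _ "\<lambda>j i. of_bool (i = j)"] exI[of _ "\<lambda>j. 0"])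
    (auto simp: sum_delta_lessThan)

lemma net_computes_prepend_layer:
  assumes comp: "net_computes ks Ls m' F"
    and H: "\<And>v i. i < m' \<Longrightarrow> H v i = (\<Sum>t<c. B i t * relu (\<Sum>j<m. Q t j * v j)) + b i"
    and c: "c > 0"
  shows "\<exists>Ls'. net_computes (c # ks) Ls' m (\<lambda>v. F (H v))"
proof -
  from comp obtain A a0 where wf: "relu_net_wf ks Ls"
    and ev: "\<And>v. eval_layers ks Ls (\<lambda>j. (\<Sum>i<m'. A j i * v i) + a0 j) 0 = F v"
    unfolding net_computes_def by blast
  define W where "W j t = (\<Sum>i<m'. A j i * B i t)" for j t
  define b' where "b' j = (\<Sum>i<m'. A j i * b i) + a0 j" for j
  have "eval_layers (c # ks) ((W, b') # Ls) (\<lambda>t. (\<Sum>j<m. Q t j * v j) + 0) 0 = F (H v)" for v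
  proof -
    define r where "r t = relu (\<Sum>j<m. Q t j * v j)" for t
    have "(\<Sum>t<c. W j t * r t) + b' j = (\<Sum>i<m'. A j i * H v i) + a0 j" for j
    proof -
      have "(\<Sum>i<m'. A j i * H v i) = (\<Sum>i<m'. \<Sum>t<c. A j i * B i t * r t) + (\<Sum>i<m'. A j i * b i)"
        by (simp add: H r_def distrib_left sum.distrib sum_distrib_left mult.assoc)
      also have "\<dots> = (\<Sum>t<c. W j t * r t) + (\<Sum>i<m'. A j i * b i)"
        unfolding W_def by (simp add: sum.swap[of _ "{..<m'}"] sum_distrib_right)
      finally show ?thesis by (simp add: b'_def)
    qed
    then show ?thesis using ev[of "H v"] by (simp add: r_def)
  qed
  moreover have "relu_net_wf (c # ks) ((W, b') # Ls)"
    using wf c by (simp add: relu_net_wf_def)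
  ultimately show ?thesis
    unfolding net_computes_def
    by (intro exI[of _ "(W, b') # Ls"] conjI exI[of _ Q] exI[of _ "\<lambda>t. 0"]) auto
qed

definition relu_minmax :: "real \<Rightarrow> real \<Rightarrow> real \<Rightarrow> real" where
  "relu_minmax \<sigma> a b = a + \<sigma> * relu (\<sigma> * (b - a))"

lemma relu_minmax_max: "relu_minmax 1 a b = max a b"
  by (simp add: relu_minmax_def relu_def)

lemma relu_minmax_neg: "relu_minmax (-1) a b = - relu_minmax 1 (- a) (- b)"
  by (simp add: relu_minmax_def)

definition reduce_pairs :: "real \<Rightarrow> nat \<Rightarrow> (nat \<Rightarrow> real) \<Rightarrow> nat \<Rightarrow> real" where
  "reduce_pairs \<sigma> m v i = (let h = (m + 1) div 2; g = i div h; q = i mod h in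
     if 2 * q + 1 < m then relu_minmax \<sigma> (v (g * m + 2 * q)) (v (g * m + 2 * q + 1))
     else v (g * m + 2 * q))"

lemma reduce_pairs_block:
  assumes "q < (m + 1) div 2"
  shows "reduce_pairs \<sigma> m v (g * ((m + 1) div 2) + q) =
    (if 2 * q + 1 < m then relu_minmax \<sigma> (v (g * m + 2 * q)) (v (g * m + 2 * q + 1))
     else v (g * m + 2 * q))"
  using assms unfolding reduce_pairs_def Let_def by simp

text \<open>Layout of the layer computing \<open>reduce_pairs\<close>: entry \<open>a = g m + 2 q\<close> of block \<open>g\<close> feeds
  the neurons \<open>g c + 3 q\<close>, \<open>g c + 3 q + 1\<close>, \<open>g c + 3 q + 2\<close> with values \<open>relu v\<^sub>a\<close>, \<open>relu (- v\<^sub>a)\<close>,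
  \<open>relu (\<sigma> (v\<^bsub>a+1\<^esub> - v\<^sub>a))\<close>, where \<open>c = (3 m + 1) div 2\<close>; an unpaired last entry of a block of odd
  length uses only the first two, so a block needs exactly \<open>c\<close> neurons.\<close>
definition pair_layer_in :: "real \<Rightarrow> nat \<Rightarrow> nat \<Rightarrow> nat \<Rightarrow> real" where
  "pair_layer_in \<sigma> m t j = (let c = (3 * m + 1) div 2; q = t mod c div 3; r = t mod c mod 3;
     a = t div c * m + 2 * q in
     if r = 0 then of_bool (j = a) else if r = 1 then - of_bool (j = a)
     else \<sigma> * (of_bool (j = a + 1) - of_bool (j = a)))"

definition pair_layer_out :: "real \<Rightarrow> nat \<Rightarrow> nat \<Rightarrow> nat \<Rightarrow> real" where
  "pair_layer_out \<sigma> m i t = (let h = (m + 1) div 2; q = i mod h;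
     t0 = i div h * ((3 * m + 1) div 2) + 3 * q in
     of_bool (t = t0) - of_bool (t = t0 + 1) +
     (if 2 * q + 1 < m then \<sigma> * of_bool (t = t0 + 2) else 0))"

lemma block_index_less:
  assumes "(g::nat) < G" "s < c"
  shows "g * c + s < G * c"
proof -
  have "Suc g * c \<le> G * c" using assms(1) by (intro mult_le_mono1) simp
  then show ?thesis using assms(2) by simp
qed

lemma relu_sub_relu_neg: "relu x - relu (- x) = x"
  by (simp add: relu_def)

lemma pair_layer_in_sum:
  fixes G m g q r :: nat
  defines "c \<equiv> (3 * m + 1) div 2" and "a \<equiv> g * m + 2 * q"
  assumes g: "g < G" and qr: "3 * q + r < c" "r < 3"
  shows "(\<Sum>j<G * m. pair_layer_in \<sigma> m (g * c + 3 * q + r) j * v j) =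
    (if r = 0 then v a else if r = 1 then - v a else \<sigma> * (v (a + 1) - v a))"
proof -
  have t: "(g * c + 3 * q + r) div c = g" "(g * c + 3 * q + r) mod c = 3 * q + r"
    using qr by (simp_all add: add.assoc)
  have w: "(3 * q + r) div 3 = q" "(3 * q + r) mod 3 = r"
    using qr(2) by simp_all
  have weights: "pair_layer_in \<sigma> m (g * c + 3 * q + r) j = (if r = 0 then of_bool (j = a)
      else if r = 1 then - of_bool (j = a) else \<sigma> * (of_bool (j = a + 1) - of_bool (j = a)))" for j
    using qr(2) unfolding pair_layer_in_def Let_def c_def[symmetric] t w a_def by simp
  have "2 * q < m" using qr unfolding c_def by linarith
  then have a: "a < G * m" unfolding a_def by (rule block_index_less[OF g])
  show ?thesis
  proof (cases "r = 2")
    case True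
    then have "2 * q + 1 < m" using qr unfolding c_def by linarith
    then have "a + 1 < G * m" using block_index_less[OF g] unfolding a_def by (metis add.assoc)
    then show ?thesis unfolding weights using a True
      by (simp add: sum_delta_lessThan left_diff_distrib sum_subtractf mult.assoc
          flip: sum_distrib_left)
  qed (use a qr(2) in \<open>simp_all add: weights sum_delta_lessThan sum_negf\<close>)
qed

lemma pair_layer_out_sum:
  fixes G m i :: nat
  defines "h \<equiv> (m + 1) div 2" and "c \<equiv> (3 * m + 1) div 2"
  defines "q \<equiv> i mod h"
  defines "t0 \<equiv> i div h * c + 3 * q"
  assumes i: "i < G * h"
  shows "(\<Sum>t<G * c. pair_layer_out \<sigma> m i t * R t) =
    R t0 - R (t0 + 1) + (if 2 * q + 1 < m then \<sigma> * R (t0 + 2) else 0)"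
proof -
  have h: "h > 0" using i by (cases "h = 0") simp_all
  then have g: "i div h < G" using i by (simp add: less_mult_imp_div_less mult.commute)
  have "q < h" using h unfolding q_def by simp
  then have "3 * q + 1 < c" unfolding c_def h_def by linarith
  then have t1: "t0 + 1 < G * c" using block_index_less[OF g] unfolding t0_def by (metis add.assoc)
  have t2: "t0 + 2 < G * c" if "2 * q + 1 < m"
  proof -
    have "3 * q + 2 < c" using that unfolding c_def by linarith
    then show ?thesis using block_index_less[OF g] unfolding t0_def by (metis add.assoc)
  qed
  have weights: "pair_layer_out \<sigma> m i t = of_bool (t = t0) - of_bool (t = t0 + 1) +
      (if 2 * q + 1 < m then \<sigma> * of_bool (t = t0 + 2) else 0)" for t
    unfolding pair_layer_out_def Let_def h_def[symmetric] c_def[symmetric] q_def[symmetric]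
      t0_def[symmetric] ..
  show ?thesis
    using t1 t2
    by (simp add: weights distrib_right left_diff_distrib sum.distrib
      sum_subtractf sum_delta_lessThan mult.assoc flip: sum_distrib_left)
qed

lemma reduce_pairs_eq_layer:
  fixes G m i :: nat
  defines "h \<equiv> (m + 1) div 2" and "c \<equiv> (3 * m + 1) div 2"
  assumes i: "i < G * h"
  shows "reduce_pairs \<sigma> m v i =
    (\<Sum>t<G * c. pair_layer_out \<sigma> m i t * relu (\<Sum>j<G * m. pair_layer_in \<sigma> m t j * v j))"
proof -
  define g where "g = i div h"
  define q where "q = i mod h"
  define a where "a = g * m + 2 * q"
  define t0 where "t0 = g * c + 3 * q"
  define R where "R t = relu (\<Sum>j<G * m. pair_layer_in \<sigma> m t j * v j)" for t
  have h: "h > 0" using i by (cases "h = 0") simp_all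
  have g: "g < G" using i h unfolding g_def by (simp add: less_mult_imp_div_less mult.commute)
  have q: "q < h" using h unfolding q_def by simp
  have neuron: "R (t0 + r) =
      relu (if r = 0 then v a else if r = 1 then - v a else \<sigma> * (v (a + 1) - v a))"
    if "3 * q + r < c" "r < 3" for r
    using pair_layer_in_sum[OF g that(1)[unfolded c_def] that(2)]
    unfolding R_def t0_def c_def a_def by simp
  have "3 * q + 1 < c" using q unfolding c_def h_def by linarith
  then have R01: "R t0 = relu (v a)" "R (t0 + 1) = relu (- v a)"
    using neuron[of 0] neuron[of 1] by simp_all
  have R2: "R (t0 + 2) = relu (\<sigma> * (v (a + 1) - v a))" if "2 * q + 1 < m"
  proof -
    have "3 * q + 2 < c" using that unfolding c_def by linarith
    then show ?thesis using neuron[of 2] by simp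
  qed
  have "(\<Sum>t<G * c. pair_layer_out \<sigma> m i t * R t) =
      R t0 - R (t0 + 1) + (if 2 * q + 1 < m then \<sigma> * R (t0 + 2) else 0)"
    using pair_layer_out_sum[OF i[unfolded h_def], where \<sigma>=\<sigma> and R=R]
    unfolding h_def[symmetric] c_def[symmetric] g_def[symmetric] q_def[symmetric] t0_def .
  moreover have "g * h + q = i" unfolding g_def q_def by simp
  ultimately show ?thesis
    using reduce_pairs_block[OF q[unfolded h_def], of \<sigma> v g] R01 R2 relu_sub_relu_neg[of "v a"]
    unfolding h_def[symmetric] R_def[symmetric] a_def[symmetric]
    by (simp add: relu_minmax_def)
qed

lemma net_computes_reduce_pairs:
  assumes comp: "net_computes ks Ls (G * ((m + 1) div 2)) F" and m: "m \<ge> 2" and G: "G \<ge> 1"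
  shows "\<exists>Ls'. net_computes (G * ((3 * m + 1) div 2) # ks) Ls' (G * m)
    (\<lambda>v. F (reduce_pairs \<sigma> m v))"
proof -
  have "G * ((3 * m + 1) div 2) > 0" using m G by simp
  then show ?thesis
    using net_computes_prepend_layer[OF comp, where H = "reduce_pairs \<sigma> m"
        and B = "pair_layer_out \<sigma> m" and Q = "pair_layer_in \<sigma> m" and b = "\<lambda>i. 0"]
      reduce_pairs_eq_layer
    by simp
qed

function reduce_blocks :: "real \<Rightarrow> nat \<Rightarrow> (nat \<Rightarrow> real) \<Rightarrow> nat \<Rightarrow> real" where
  "reduce_blocks \<sigma> m v =
    (if m \<le> 1 then v else reduce_blocks \<sigma> ((m + 1) div 2) (reduce_pairs \<sigma> m v))"
  by pat_completeness auto
termination by (relation "Wellfounded.measure (\<lambda>(\<sigma>, m, v). m)") auto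

function halving_widths :: "nat \<Rightarrow> nat list" where
  "halving_widths m = (if m \<le> 1 then [] else (3 * m + 1) div 2 # halving_widths ((m + 1) div 2))"
  by pat_completeness auto
termination by (relation "Wellfounded.measure id") auto

declare reduce_blocks.simps[simp del] halving_widths.simps[simp del]

lemma halving_step_less: "\<not> (m::nat) \<le> 1 \<Longrightarrow> (m + 1) div 2 < m \<and> 1 \<le> (m + 1) div 2"
  by auto

lemma net_computes_reduce_blocks:
  assumes "G \<ge> 1" "m \<ge> 1" "net_computes ks Ls G F"
  shows "\<exists>Ls'. net_computes (map ((*) G) (halving_widths m) @ ks) Ls' (G * m)
    (\<lambda>v. F (reduce_blocks \<sigma> m v))"
  using assms(2)
proof (induction m rule: less_induct)
  case (less m)
  show ?case
  proof (cases "m \<le> 1")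
    case True
    then have "m = 1" using less.prems by simp
    then show ?thesis using assms(3) by (simp add: reduce_blocks.simps halving_widths.simps) blast
  next
    case False
    then obtain Ls' where "net_computes (map ((*) G) (halving_widths ((m + 1) div 2)) @ ks) Ls'
        (G * ((m + 1) div 2)) (\<lambda>v. F (reduce_blocks \<sigma> ((m + 1) div 2) v))"
      using less.IH halving_step_less by blast
    from net_computes_reduce_pairs[OF this _ assms(1), of \<sigma>] False show ?thesis
      by (simp add: reduce_blocks.simps[of _ m] halving_widths.simps[of m])
  qed
qed

lemma reduce_blocks_uminus: "reduce_blocks (-1) m v = (\<lambda>i. - reduce_blocks 1 m (\<lambda>j. - v j) i)"
proof (induction m arbitrary: v rule: less_induct)
  case (less m)
  have "reduce_pairs (-1) m v = (\<lambda>i. - reduce_pairs 1 m (\<lambda>j. - v j) i)"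
    by (simp add: reduce_pairs_def relu_minmax_neg Let_def fun_eq_iff)
  then show ?case
    using less.IH[OF conjunct1[OF halving_step_less]]
    by (simp add: reduce_blocks.simps[of _ m])
qed

lemma Max_reduce_pairs:
  assumes "2 \<le> m"
  defines "h \<equiv> (m + 1) div 2"
  shows "Max ((\<lambda>q. reduce_pairs 1 m v (g * h + q)) ` {..<h}) = Max ((\<lambda>i. v (g * m + i)) ` {..<m})"
proof -
  define pair where "pair q = {2 * q, 2 * q + 1} \<inter> {..<m}" for q
  have pair_ne: "pair q \<noteq> {}" if "q < h" for q
    using that unfolding pair_def h_def by auto
  have reduce_pair: "reduce_pairs 1 m v (g * h + q) = Max ((\<lambda>i. v (g * m + i)) ` pair q)"
    if "q < h" for q
  proof -
    have "2 * q < m" using that unfolding h_def by linarith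
    then show ?thesis
      using reduce_pairs_block[OF that[unfolded h_def], of 1 v g]
      by (auto simp: pair_def h_def relu_minmax_max Int_insert_left)
  qed
  show ?thesis
  proof (rule Max_eq_if)
    show "\<forall>a\<in>(\<lambda>q. reduce_pairs 1 m v (g * h + q)) ` {..<h}.
        \<exists>b\<in>(\<lambda>i. v (g * m + i)) ` {..<m}. a \<le> b"
    proof
      fix a assume "a \<in> (\<lambda>q. reduce_pairs 1 m v (g * h + q)) ` {..<h}"
      then obtain q where "q < h" "a = Max ((\<lambda>i. v (g * m + i)) ` pair q)"
        using reduce_pair by auto
      then have "a \<in> (\<lambda>i. v (g * m + i)) ` pair q"
        using pair_ne by (simp add: pair_def)
      then show "\<exists>b\<in>(\<lambda>i. v (g * m + i)) ` {..<m}. a \<le> b" unfolding pair_def by blast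
    qed
    show "\<forall>b\<in>(\<lambda>i. v (g * m + i)) ` {..<m}.
        \<exists>a\<in>(\<lambda>q. reduce_pairs 1 m v (g * h + q)) ` {..<h}. b \<le> a"
    proof
      fix b assume "b \<in> (\<lambda>i. v (g * m + i)) ` {..<m}"
      then obtain i where i: "i < m" "b = v (g * m + i)" by blast
      define q where "q = i div 2"
      have q: "q < h" "i \<in> pair q" using i unfolding q_def h_def pair_def by auto
      have "b \<le> Max ((\<lambda>i. v (g * m + i)) ` pair q)"
        unfolding i(2) by (rule Max_ge[OF _ imageI[OF q(2)]]) (simp add: pair_def)
      also have "\<dots> = reduce_pairs 1 m v (g * h + q)" using reduce_pair[OF q(1)] by simp
      finally show "\<exists>a\<in>(\<lambda>q. reduce_pairs 1 m v (g * h + q)) ` {..<h}. b \<le> a"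
        using q(1) by blast
    qed
  qed (use assms in \<open>simp_all add: h_def\<close>)
qed

lemma reduce_blocks_max:
  assumes "m \<ge> 1"
  shows "reduce_blocks 1 m v g = Max ((\<lambda>i. v (g * m + i)) ` {..<m})"
  using assms
proof (induction m arbitrary: v rule: less_induct)
  case (less m)
  show ?case
  proof (cases "m \<le> 1")
    case True
    then have "m = 1" using less.prems by simp
    then show ?thesis by (simp add: reduce_blocks.simps lessThan_Suc)
  next
    case False
    then have "reduce_blocks 1 m v g =
        Max ((\<lambda>q. reduce_pairs 1 m v (g * ((m + 1) div 2) + q)) ` {..<(m + 1) div 2})"
      using less.IH[OF halving_step_less[OF False, THEN conjunct1]] halving_step_less[OF False]
      by (simp add: reduce_blocks.simps[of _ m])
    also have "\<dots> = Max ((\<lambda>i. v (g * m + i)) ` {..<m})"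
      using False by (intro Max_reduce_pairs) simp
    finally show ?thesis .
  qed
qed

lemma reduce_blocks_min:
  assumes "m \<ge> 1"
  shows "reduce_blocks (-1) m v g = Min ((\<lambda>i. v (g * m + i)) ` {..<m})"
proof -
  have "reduce_blocks (-1) m v g = - Max ((\<lambda>i. - v (g * m + i)) ` {..<m})"
    using reduce_blocks_max[OF assms, of "\<lambda>j. - v j" g] by (simp add: reduce_blocks_uminus)
  also have "\<dots> = Min (uminus ` (\<lambda>i. - v (g * m + i)) ` {..<m})"
    using assms by (intro minus_Max_eq_Min) (auto simp: lessThan_empty_iff)
  finally show ?thesis by (simp add: image_image)
qed

lemma halving_widths_length:
  assumes "m \<ge> 1"
  shows "m \<le> 2 ^ length (halving_widths m) \<and> 2 ^ length (halving_widths m) < 2 * m"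
  using assms
proof (induction m rule: halving_widths.induct)
  case (1 m)
  show ?case
  proof (cases "m \<le> 1")
    case True
    then show ?thesis using "1.prems" by (simp add: halving_widths.simps)
  next
    case False
    define s where "s = length (halving_widths ((m + 1) div 2))"
    have IH: "(m + 1) div 2 \<le> 2 ^ s" "2 ^ s < 2 * ((m + 1) div 2)"
      using "1.IH"[OF False] False unfolding s_def by auto
    have "2 ^ s \<noteq> m" if "odd m"
      using that False by (cases s) auto
    then have "2 ^ s < m" using IH by presburger
    then show ?thesis using IH False by (simp add: halving_widths.simps[of m] s_def)
  qed
qed

lemma ceiling_log2_eq_length_halving_widths:
  assumes "m \<ge> 1"
  shows "\<lceil>log 2 (real m)\<rceil> = int (length (halving_widths m))"
proof (cases "length (halving_widths m)")
  case 0
  then have "m = 1" using halving_widths_length[OF assms] assms by simp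
  then show ?thesis by (simp add: halving_widths.simps)
next
  case (Suc s)
  then show ?thesis
    using halving_widths_length[OF assms] ceiling_log_nat_eq_if[of 2 s m] by simp
qed

lemma length_halving_widths_mono:
  assumes "1 \<le> m" "m \<le> m'"
  shows "length (halving_widths m) \<le> length (halving_widths m')"
proof -
  have "(2::nat) ^ length (halving_widths m) < 2 ^ Suc (length (halving_widths m'))"
    using halving_widths_length[OF assms(1)] halving_widths_length[of m'] assms by auto
  then show ?thesis by (simp only: power_strict_increasing_iff)
qed

lemma length_halving_widths_le: "length (halving_widths m) \<le> m - 1"
proof (induction m rule: halving_widths.induct)
  case (1 m)
  then show ?case by (cases "m \<le> 1") (auto simp: halving_widths.simps[of m])
qed

lemma halving_widths_bounds:
  "w \<in> set (halving_widths m) \<Longrightarrow> 0 < w \<and> w \<le> (3 * m + 1) div 2"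
proof (induction m rule: halving_widths.induct)
  case (1 m)
  show ?case
  proof (cases "m \<le> 1")
    case False
    have "(3 * ((m + 1) div 2) + 1) div 2 \<le> (3 * m + 1) div 2" by presburger
    then show ?thesis using "1" False by (auto simp: halving_widths.simps[of m])
  qed (use "1.prems" in \<open>simp add: halving_widths.simps\<close>)
qed

lemma sum_halving_widths:
  assumes "m \<ge> 1"
  shows "2 * sum_list (halving_widths m) + 6 \<le>
    6 * 2 ^ length (halving_widths m) + length (halving_widths m)"
  using assms
proof (induction m rule: halving_widths.induct)
  case (1 m)
  show ?case
  proof (cases "m \<le> 1")
    case False
    define s where "s = length (halving_widths ((m + 1) div 2))"
    have "(m + 1) div 2 \<le> 2 ^ s"
      using halving_widths_length halving_step_less[OF False] unfolding s_def by blast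
    moreover have "m \<le> 2 * ((m + 1) div 2)" by presburger
    moreover have "2 * ((3 * m + 1) div 2) \<le> 3 * m + 1" by presburger
    moreover have "2 * sum_list (halving_widths ((m + 1) div 2)) + 6 \<le> 6 * 2 ^ s + s"
      using "1.IH"[OF False] halving_step_less[OF False] unfolding s_def by blast
    moreover have step: "halving_widths m = (3 * m + 1) div 2 # halving_widths ((m + 1) div 2)"
      using False by (simp add: halving_widths.simps[of m])
    ultimately show ?thesis
      by (simp only: step sum_list.Cons length_Cons power_Suc flip: s_def) (simp add: algebra_simps)
  qed (simp add: halving_widths.simps)
qed

definition maxmin_widths :: "nat \<Rightarrow> nat \<Rightarrow> nat list" where
  "maxmin_widths k M = map ((*) M) (halving_widths k) @ halving_widths M"

lemma relu_net_of_max_min: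
  fixes a :: "nat \<Rightarrow> real^'n" and b :: "nat \<Rightarrow> real" and idx :: "nat \<Rightarrow> nat \<Rightarrow> nat"
  assumes k: "k \<ge> 1" and M: "M \<ge> 1"
  shows "\<exists>W1 b1 Ls. relu_net_wf (maxmin_widths k M) Ls \<and>
    (\<forall>x. relu_net_eval (maxmin_widths k M) W1 b1 Ls x =
      Max ((\<lambda>g. Min ((\<lambda>i. a (idx g i) \<bullet> x + b (idx g i)) ` {..<k})) ` {..<M}))"
proof -
  have "map ((*) 1) (halving_widths M) = halving_widths M" by (simp add: map_idI)
  then obtain Ls1 where "net_computes (halving_widths M) Ls1 M (\<lambda>v. reduce_blocks 1 M v 0)"
    using net_computes_reduce_blocks[OF _ M net_computes_first_input, of 1 1] by auto
  from net_computes_reduce_blocks[OF M k this, of "-1"]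
  obtain Ls A a0 where wf: "relu_net_wf (maxmin_widths k M) Ls"
    and ev: "\<And>v. eval_layers (maxmin_widths k M) Ls (\<lambda>j. (\<Sum>i<M * k. A j i * v i) + a0 j) 0
       = reduce_blocks 1 M (reduce_blocks (-1) k v) 0"
    unfolding net_computes_def maxmin_widths_def by blast
  define v where "v x i = a (idx (i div k) (i mod k)) \<bullet> x + b (idx (i div k) (i mod k))" for x i
  define W1 where "W1 j = (\<Sum>i<M * k. A j i *\<^sub>R a (idx (i div k) (i mod k)))" for j
  define b1 where "b1 j = (\<Sum>i<M * k. A j i * b (idx (i div k) (i mod k))) + a0 j" for j
  have "relu_net_eval (maxmin_widths k M) W1 b1 Ls x =
      Max ((\<lambda>g. Min ((\<lambda>i. a (idx g i) \<bullet> x + b (idx g i)) ` {..<k})) ` {..<M})" for x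
  proof -
    have "(\<lambda>j. W1 j \<bullet> x + b1 j) = (\<lambda>j. (\<Sum>i<M * k. A j i * v x i) + a0 j)"
      by (auto simp: W1_def b1_def v_def inner_sum_left distrib_left sum.distrib)
    then have "relu_net_eval (maxmin_widths k M) W1 b1 Ls x =
      reduce_blocks 1 M (reduce_blocks (-1) k (v x)) 0"
      unfolding relu_net_eval_def using ev by simp
    also have "\<dots> = Max ((\<lambda>g. Min ((\<lambda>i. v x (g * k + i)) ` {..<k})) ` {..<M})"
      using reduce_blocks_max[OF M] reduce_blocks_min[OF k] by simp
    finally show ?thesis using k by (simp add: v_def)
  qed
  then show ?thesis using wf by blast
qed

lemma ceiling_three_halves: "of_int \<lceil>3 * real k / 2\<rceil> = real ((3 * k + 1) div 2)"
proof -
  have "\<lceil>3 * real k / 2\<rceil> = \<lceil>of_int (int (3 * k)) / (of_int 2 :: real)\<rceil>" by simp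
  also have "\<dots> = - (- int (3 * k) div 2)" by (rule ceiling_divide_eq_div)
  also have "\<dots> = int ((3 * k + 1) div 2)" by presburger
  finally show ?thesis by simp
qed

lemma foldr_max_le: "(\<And>w. w \<in> set ws \<Longrightarrow> w \<le> B) \<Longrightarrow> foldr max ws (0::nat) \<le> B"
  by (induction ws) auto

lemma num_layers_maxmin_widths:
  assumes "1 \<le> k" "1 \<le> M" "M \<le> N"
  shows "real (num_layers (maxmin_widths k M)) \<le> of_int (\<lceil>log 2 (real N)\<rceil> + \<lceil>log 2 (real k)\<rceil> + 1)"
  using length_halving_widths_mono[OF assms(2,3)] assms
  by (simp add: num_layers_def maxmin_widths_def ceiling_log2_eq_length_halving_widths)

lemma max_width_maxmin_widths:
  assumes "1 \<le> k" "M \<le> N" "k = 1 \<Longrightarrow> M = 1"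
  shows "real (max_width (maxmin_widths k M)) \<le>
    (if k > 1 then of_int \<lceil>3 * real k / 2\<rceil> else 0) * real N"
proof (cases "k = 1")
  case True
  then show ?thesis using assms(3)
    by (simp add: maxmin_widths_def max_width_def halving_widths.simps)
next
  case False
  define c where "c = (3 * k + 1) div 2"
  have c: "3 \<le> c" using assms(1) False unfolding c_def by linarith
  have "w \<le> c * N" if w: "w \<in> set (maxmin_widths k M)" for w
  proof -
    consider w' where "w' \<in> set (halving_widths k)" "w = M * w'" | "w \<in> set (halving_widths M)"
      using w unfolding maxmin_widths_def by auto
    then show ?thesis
    proof cases
      case 1
      then have "w \<le> M * c" using halving_widths_bounds[of w' k] unfolding c_def by simp
      also have "\<dots> \<le> c * N" using assms(2) by (simp add: mult.commute)
      finally show ?thesis .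
    next
      case 2
      then have "w \<le> 3 * N" using halving_widths_bounds[of w M] assms(2) by linarith
      also have "\<dots> \<le> c * N" using c by simp
      finally show ?thesis .
    qed
  qed
  then have "max_width (maxmin_widths k M) \<le> c * N" unfolding max_width_def by (rule foldr_max_le)
  then show ?thesis using False assms(1) by (simp add: ceiling_three_halves c_def flip: of_nat_mult)
qed

lemma hidden_neurons_maxmin_widths:
  assumes k: "1 \<le> k" and M: "1 \<le> M" "M \<le> N" and k1: "k = 1 \<Longrightarrow> M = 1" and k2: "2 \<le> k \<Longrightarrow> 2 \<le> N"
  shows "real (hidden_neurons (maxmin_widths k M)) \<le>
    (3 * 2 ^ nat \<lceil>log 2 (real k)\<rceil> + 2 * of_int \<lceil>log 2 (real k)\<rceil> - 3) * real N
    + 3 * 2 ^ nat \<lceil>log 2 (real N)\<rceil> - 2 * of_int \<lceil>log 2 (real k)\<rceil> - 3"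
proof -
  define K where "K = length (halving_widths k)"
  define L where "L = length (halving_widths N)"
  define s where "s = sum_list (halving_widths k)"
  define t where "t = sum_list (halving_widths M)"
  have N: "1 \<le> N" using M by simp
  have hidden: "hidden_neurons (maxmin_widths k M) = M * s + t"
    unfolding hidden_neurons_def maxmin_widths_def s_def t_def by (simp add: sum_list_const_mult)
  have "2 * s + 6 \<le> 6 * 2 ^ K + K"
    using sum_halving_widths[OF k] unfolding s_def K_def .
  then have "real (2 * s + 6) \<le> real (6 * 2 ^ K + K)" by (simp only: of_nat_le_iff)
  then have s: "2 * real s + 6 \<le> 6 * 2 ^ K + real K" by simp
  have LM: "length (halving_widths M) \<le> L" unfolding L_def
    by (rule length_halving_widths_mono[OF M])
  then have "(2::nat) ^ length (halving_widths M) \<le> 2 ^ L" by (rule power_increasing) simp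
  then have "2 * t + 6 \<le> 6 * 2 ^ L + L"
    using sum_halving_widths[OF M(1)] LM unfolding t_def by linarith
  then have "real (2 * t + 6) \<le> real (6 * 2 ^ L + L)" by (simp only: of_nat_le_iff)
  then have t: "2 * real t + 6 \<le> 6 * 2 ^ L + real L" by simp
  have "real M * real s + real t \<le>
    (3 * 2 ^ K + 2 * real K - 3) * real N + 3 * 2 ^ L - 2 * real K - 3"
  proof (cases "k = 1")
    case True
    then show ?thesis using k1 t by (simp add: s_def t_def K_def halving_widths.simps)
  next
    case False
    then have "2 \<le> k" "2 \<le> N" using k k2 by auto
    then have K: "1 \<le> K" unfolding K_def by (simp add: halving_widths.simps[of k])
    have "L \<le> N - 1" unfolding L_def by (rule length_halving_widths_le)
    then have L: "real L \<le> real N - 1" using N by linarith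
    have "real M * real s \<le> real N * real s" using M by (intro mult_right_mono) simp_all
    moreover have "real N * (2 * real s + 6) \<le> real N * (6 * 2 ^ K + real K)"
      using s by (intro mult_left_mono) simp_all
    moreover have "0 \<le> (real K - 1) * (3 * real N - 4)" using K \<open>2 \<le> N\<close> by simp
    ultimately show ?thesis using t L \<open>2 \<le> N\<close> by (simp add: algebra_simps)
  qed
  then show ?thesis
    using k N by (simp add: hidden ceiling_log2_eq_length_halving_widths K_def L_def)
qed

theorem theorem3:
  fixes p :: "real^'n \<Rightarrow> real"
  assumes "is_cpwl p"
  defines "k \<equiv> num_components p"
      and "\<phi> \<equiv> phi CARD('n) (num_components p)"
  shows "\<exists>ks W1 b1 Ls. relu_net_wf ks Ls \<and> (\<forall>x. p x = relu_net_eval ks W1 b1 Ls x) \<and>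
     real (num_layers ks) \<le> of_int (\<lceil>log 2 (real \<phi>)\<rceil> + \<lceil>log 2 (real k)\<rceil> + 1) \<and>
     real (max_width ks) \<le> (if k > 1 then of_int \<lceil>3 * real k / 2\<rceil> else 0) * real \<phi> \<and>
     real (hidden_neurons ks) \<le>
        (3 * 2 ^ nat \<lceil>log 2 (real k)\<rceil> + 2 * of_int \<lceil>log 2 (real k)\<rceil> - 3) * real \<phi>
        + 3 * 2 ^ nat \<lceil>log 2 (real \<phi>)\<rceil> - 2 * of_int \<lceil>log 2 (real k)\<rceil> - 3"
proof -
  obtain a b where "affine_pieces p a b k"
    using cpwl_affine_pieces[OF assms(1)] unfolding k_def by blast
  then interpret affine_pieces p a b k .
  have k: "1 \<le> k" using num_pieces_pos by simp
  have \<phi>: "\<phi> = phi CARD('n) k" unfolding \<phi>_def k_def ..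
  obtain M idx where M: "1 \<le> M" "M \<le> \<phi>"
    and rep: "\<And>x. p x = Max ((\<lambda>g. Min ((\<lambda>i. a (idx g i) \<bullet> x + b (idx g i)) ` {..<k})) ` {..<M})"
    using max_min_representation unfolding \<phi> by blast
  obtain W1 b1 Ls where "relu_net_wf (maxmin_widths k M) Ls"
    and "\<forall>x. relu_net_eval (maxmin_widths k M) W1 b1 Ls x =
      Max ((\<lambda>g. Min ((\<lambda>i. a (idx g i) \<bullet> x + b (idx g i)) ` {..<k})) ` {..<M})"
    using relu_net_of_max_min[OF k M(1)] by blast
  moreover have "k = 1 \<Longrightarrow> M = 1" "2 \<le> k \<Longrightarrow> 2 \<le> \<phi>"
    using M phi_one phi_ge_two[of k "CARD('n)"] unfolding \<phi> by auto
  ultimately show ?thesis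
    using rep num_layers_maxmin_widths[OF k M] max_width_maxmin_widths[OF k M(2)]
      hidden_neurons_maxmin_widths[OF k M]
    by (intro exI[of _ "maxmin_widths k M"] exI[of _ W1] exI[of _ b1] exI[of _ Ls]) auto
qed

end
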